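(* Let $E_1 \subseteq H^2$ be a closed subspace and let $E_2 = \Theta_2 H^2$ for an inner function $\Theta_2$. Let $k \in E_1$ be nonzero with inner-outer factorization $k = \theta p$, where $\theta$ is inner and $p$ is outer in $H^2$. Then the minimal generalized Toeplitz kernel containing $k$ is \[ K_{\min}^{E_1,E_2}(k) = \ker T^{E_1,E_2}_{\frac{\Theta_2\,\overline{\theta z p}}{p}} . \]
   Context: $H^2$ is the Hardy space of the unit disk, identified with a closed subspace of $L^2(\mathbb{T})$ via boundary values; $P_+$ is the orthogonal projection of $L^2(\mathbb{T})$ onto $H^2$ and $T_g f = P_+(gf)$. For a symbol $g$ (a measurable function on $\mathbb{T}$), the generalized Toeplitz kernel is $\ker T_g^{E_1,E_2} := \{ f \in E_1 : T_g f \in E_2^\perp\}$, where $E_2^\perp$ is the orthogonal complement of $E_2$ in $L^2(\mathbb{T})$. For nonzero $k\in E_1$, the minimal generalized Toeplitz kernel $K^{E_1,E_2}_{\min}(k)$ is the smallest kernel of the form $\ker T_g^{E_1,E_2}$ containing $k$: i.e. it is such a kernel containing $k$, and for every $g\in L^\infty(\mathbb{T})$ with $k \in \ker T_g^{E_1,E_2}$ one has $K^{E_1,E_2}_{\min}(k) \subseteq \ker T_g^{E_1,E_2}$. Here $z$ denotes the coordinate function on $\mathbb{T}$. *)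

theory Defs
  imports "HOL-Analysis.Analysis" "HOL-Computational_Algebra.Polynomial"
begin

text \<open>Functions on the unit circle T are represented as functions complex => complex;
  only their values on T matter.\<close>

definition circle_measure :: "complex measure" where
  "circle_measure =
     distr (density (restrict_space lborel {0..2*pi}) (\<lambda>_. ennreal (1/(2*pi)))) borel cis"

definition L2T :: "(complex \<Rightarrow> complex) set" where
  "L2T = {f. f \<in> borel_measurable circle_measure \<and>
             integrable circle_measure (\<lambda>z. (cmod (f z))^2)}"

definition LinfT :: "(complex \<Rightarrow> complex) set" where
  "LinfT = {f. f \<in> borel_measurable circle_measure \<and>
               (\<exists>C. AE z in circle_measure. cmod (f z) \<le> C)}"

definition inner2 :: "(complex \<Rightarrow> complex) \<Rightarrow> (complex \<Rightarrow> complex) \<Rightarrow> complex" where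
  "inner2 f g = integral\<^sup>L circle_measure (\<lambda>z. f z * cnj (g z))"

definition norm2 :: "(complex \<Rightarrow> complex) \<Rightarrow> real" where
  "norm2 f = sqrt (integral\<^sup>L circle_measure (\<lambda>z. (cmod (f z))^2))"

definition fourier_coeff :: "(complex \<Rightarrow> complex) \<Rightarrow> int \<Rightarrow> complex" where
  "fourier_coeff f n = integral\<^sup>L circle_measure (\<lambda>z. f z * z powi (- n))"

definition H2 :: "(complex \<Rightarrow> complex) set" where
  "H2 = {f \<in> L2T. \<forall>n::int. n < 0 \<longrightarrow> fourier_coeff f n = 0}"

definition orth :: "(complex \<Rightarrow> complex) set \<Rightarrow> (complex \<Rightarrow> complex) set" where
  "orth E = {f \<in> L2T. \<forall>e\<in>E. inner2 f e = 0}"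

definition closed_subspace_L2 :: "(complex \<Rightarrow> complex) set \<Rightarrow> bool" where
  "closed_subspace_L2 E \<longleftrightarrow> E \<subseteq> L2T \<and> (\<lambda>_. 0) \<in> E \<and>
     (\<forall>f\<in>E. \<forall>g\<in>E. (\<lambda>z. f z + g z) \<in> E) \<and>
     (\<forall>c::complex. \<forall>f\<in>E. (\<lambda>z. c * f z) \<in> E) \<and>
     (\<forall>F f. (\<forall>n::nat. F n \<in> E) \<longrightarrow> f \<in> L2T \<longrightarrow>
        (\<lambda>n. norm2 (\<lambda>z. F n z - f z)) \<longlonglongrightarrow> 0 \<longrightarrow> f \<in> E)"

definition Pplus :: "(complex \<Rightarrow> complex) \<Rightarrow> (complex \<Rightarrow> complex)" where
  "Pplus h = (SOME u. u \<in> H2 \<and> (\<forall>e\<in>H2. inner2 (\<lambda>z. h z - u z) e = 0))"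

definition toeplitz :: "(complex \<Rightarrow> complex) \<Rightarrow> (complex \<Rightarrow> complex) \<Rightarrow> (complex \<Rightarrow> complex)" where
  "toeplitz g f = Pplus (\<lambda>z. g z * f z)"

definition gen_toeplitz_kernel ::
  "(complex \<Rightarrow> complex) \<Rightarrow> (complex \<Rightarrow> complex) set \<Rightarrow> (complex \<Rightarrow> complex) set \<Rightarrow> (complex \<Rightarrow> complex) set" where
  "gen_toeplitz_kernel g E1 E2 = {f \<in> E1. toeplitz g f \<in> orth E2}"

definition is_min_gen_toeplitz_kernel ::
  "(complex \<Rightarrow> complex) set \<Rightarrow> (complex \<Rightarrow> complex) set \<Rightarrow> (complex \<Rightarrow> complex) \<Rightarrow> (complex \<Rightarrow> complex) set \<Rightarrow> bool" where
  "is_min_gen_toeplitz_kernel E1 E2 k K \<longleftrightarrow>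
     (\<exists>g\<in>LinfT. K = gen_toeplitz_kernel g E1 E2) \<and> k \<in> K \<and>
     (\<forall>g\<in>LinfT. k \<in> gen_toeplitz_kernel g E1 E2 \<longrightarrow> K \<subseteq> gen_toeplitz_kernel g E1 E2)"

definition inner_fun :: "(complex \<Rightarrow> complex) \<Rightarrow> bool" where
  "inner_fun \<theta> \<longleftrightarrow> \<theta> \<in> H2 \<and> (AE z in circle_measure. cmod (\<theta> z) = 1)"

text \<open>Outer functions in H^2: cyclic vectors for the shift, i.e. the polynomial multiples
  q p (q an analytic polynomial) are dense in H^2 (Beurling).\<close>
definition outer_fun :: "(complex \<Rightarrow> complex) \<Rightarrow> bool" where
  "outer_fun p \<longleftrightarrow> p \<in> H2 \<and>
     (\<forall>h\<in>H2. \<forall>\<epsilon>>0. \<exists>q::complex poly. norm2 (\<lambda>z. poly q z * p z - h z) < \<epsilon>)"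

definition inner_mult_H2 :: "(complex \<Rightarrow> complex) \<Rightarrow> (complex \<Rightarrow> complex) set" where
  "inner_mult_H2 \<Theta> = {f \<in> L2T. \<exists>h\<in>H2. AE z in circle_measure. f z = \<Theta> z * h z}"

end

theory Submission
  imports Defs
begin

text \<open>
  For \<open>f \<in> E1\<close> the kernel condition for \<open>T\<^sub>g\<close> with target space \<open>\<Theta>\<^sub>2 H\<^sup>2\<close> says that
  $g f \overline{\Theta_2}$ is orthogonal to $H^2$, i.e. that $\overline{z g f \overline{\Theta_2}} \in H^2$.
  For the symbol $g_0 = \Theta_2 \overline{\theta z p} / p$ one has
  $g_0 k \overline{\Theta_2} = \overline{z p}$, so \<open>k\<close> lies in the kernel of \<open>T\<^sub>g\<^sub>0\<close>.
  Conversely, let \<open>k\<close> lie in the kernel of \<open>T\<^sub>g\<close> and \<open>f\<close> in that of \<open>T\<^sub>g\<^sub>0\<close>. Then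
  $a = \overline{z g k \overline{\Theta_2}}$ and $b = \overline{z g_0 f \overline{\Theta_2}}$ belong to $H^2$,
  and pointwise $g f \overline{\Theta_2} = \overline{z a b / p}$. Now $\int z\, a b\, q = 0$ for every
  polynomial \<open>q\<close>, and the multiples \<open>q p\<close> are dense in $H^2$ because \<open>p\<close> is outer; hence
  $\int z\, (a b / p)\, h = 0$ for all $h \in H^2$, which says that \<open>f\<close> lies in the kernel of \<open>T\<^sub>g\<close>.
\<close>

section \<open>The normalised measure on the circle\<close>

lemma sets_circle_measure [simp, measurable_cong]: "sets circle_measure = sets borel"
  by (simp add: circle_measure_def)

lemma space_circle_measure [simp]: "space circle_measure = UNIV"
  by (simp add: circle_measure_def)

lemma measurable_circle_measure_iff [simp]:
  "f \<in> borel_measurable circle_measure \<longleftrightarrow> f \<in> borel_measurable borel"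
  by (simp add: measurable_def)

definition normalized_arc_measure :: "real measure" where
  "normalized_arc_measure = density (restrict_space lborel {0..2*pi}) (\<lambda>_. ennreal (1/(2*pi)))"

lemma circle_measure_eq_distr: "circle_measure = distr normalized_arc_measure borel cis"
  by (simp add: circle_measure_def normalized_arc_measure_def)

lemma sets_normalized_arc_measure [measurable_cong, simp]:
  "sets normalized_arc_measure = sets (restrict_space lborel {0..2*pi})"
  by (simp add: normalized_arc_measure_def)

lemma measurable_cis [measurable]: "cis \<in> borel_measurable borel"
  by (intro borel_measurable_continuous_onI continuous_intros)

lemma measurable_cis_arc [measurable]: "cis \<in> measurable normalized_arc_measure borel"
  unfolding measurable_cong_sets[OF sets_normalized_arc_measure refl]
  by (intro measurable_restrict_space1) simp

lemma integral_circle_measure: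
  fixes f :: "complex \<Rightarrow> 'b::{banach, second_countable_topology}"
  assumes [measurable]: "f \<in> borel_measurable borel"
  shows "integral\<^sup>L circle_measure f = (1/(2*pi)) *\<^sub>R (LINT t:{0..2*pi}|lborel. f (cis t))"
proof -
  have "integral\<^sup>L circle_measure f = integral\<^sup>L normalized_arc_measure (\<lambda>t. f (cis t))"
    unfolding circle_measure_eq_distr by (rule integral_distr) auto
  also have "\<dots> = integral\<^sup>L (restrict_space lborel {0..2*pi}) (\<lambda>t. (1/(2*pi)) *\<^sub>R f (cis t))"
    unfolding normalized_arc_measure_def by (rule integral_density) auto
  also have "\<dots> = (LINT t|lborel. indicator {0..2*pi} t *\<^sub>R ((1/(2*pi)) *\<^sub>R f (cis t)))"
    by (rule integral_restrict_space) auto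
  also have "\<dots> = (LINT t|lborel. (1/(2*pi)) *\<^sub>R (indicator {0..2*pi} t *\<^sub>R f (cis t)))"
    by (intro Bochner_Integration.integral_cong) (auto simp: scaleR_left_commute)
  also have "\<dots> = (1/(2*pi)) *\<^sub>R (LINT t:{0..2*pi}|lborel. f (cis t))"
    unfolding set_lebesgue_integral_def by (rule integral_scaleR_right)
  finally show ?thesis .
qed

lemma AE_circle_measure_norm: "AE z in circle_measure. cmod z = 1"
proof -
  have "AE t in normalized_arc_measure. cmod (cis t) = 1" by simp
  then show ?thesis unfolding circle_measure_eq_distr by (subst AE_distr_iff) auto
qed

lemma emeasure_circle_measure_UNIV: "emeasure circle_measure UNIV = 1"
proof -
  let ?I = "restrict_space lborel {0..2*pi}"
  have I: "{0..2*pi} \<in> sets ?I"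
    using sets.top[of ?I] by (simp add: space_restrict_space)
  have "emeasure circle_measure UNIV = emeasure normalized_arc_measure {0..2*pi}"
    unfolding circle_measure_eq_distr
    by (subst emeasure_distr) (auto simp: space_restrict_space normalized_arc_measure_def)
  also have "\<dots> = (\<integral>\<^sup>+ t. ennreal (1/(2*pi)) * indicator {0..2*pi} t \<partial>?I)"
    unfolding normalized_arc_measure_def using I
    by (subst emeasure_density) (auto simp: space_restrict_space)
  also have "\<dots> = ennreal (1/(2*pi)) * emeasure ?I {0..2*pi}"
    using I by (subst nn_integral_cmult_indicator) (auto simp: space_restrict_space)
  also have "\<dots> = 1"
    by (subst emeasure_restrict_space) (auto simp: ennreal_mult[symmetric])
  finally show ?thesis .
qed

interpretation circle: finite_measure circle_measure
  by (rule finite_measureI) (simp add: emeasure_circle_measure_UNIV)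

lemma measure_circle_measure_UNIV [simp]: "measure circle_measure UNIV = 1"
  using circle.emeasure_eq_measure[of UNIV] emeasure_circle_measure_UNIV by simp

lemma set_integral_cis_multiple:
  fixes n :: int
  shows "(LINT t:{0..2*pi}|lborel. cis (of_int n * t)) = (if n = 0 then 2 * pi else 0)"
proof -
  have "continuous_on {0..2*pi} (\<lambda>t. cis (of_int n * t))"
    by (intro continuous_intros)
  then have eq: "(LINT t:{0..2*pi}|lborel. cis (of_int n * t)) = integral {0..2*pi} (\<lambda>t. cis (of_int n * t))"
    by (intro set_borel_integral_eq_integral(2) borel_integrable_atLeastAtMost')
  show ?thesis
  proof (cases "n = 0")
    case True
    then show ?thesis unfolding eq by (simp add: scaleR_conv_of_real)
  next
    case False
    define F where "F = (\<lambda>t. exp (\<i> * of_int n * of_real t) / (\<i> * of_int n))"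
    have "(F has_vector_derivative cis (of_int n * t)) (at t within {0..2*pi})" for t
    proof -
      have "((\<lambda>t. exp (\<i> * of_int n * t) / (\<i> * of_int n)) has_field_derivative
              exp (\<i> * of_int n * of_real t)) (at (of_real t))"
        using False by (auto intro!: derivative_eq_intros simp: field_simps)
      from has_vector_derivative_real_field[OF this] show ?thesis
        by (simp add: F_def cis_conv_exp mult.commute mult.left_commute)
    qed
    then have "((\<lambda>t. cis (of_int n * t)) has_integral (F (2*pi) - F 0)) {0..2*pi}"
      by (intro fundamental_theorem_of_calculus) auto
    moreover have "F (2*pi) = F 0"
      using cis_multiple_2pi[of "of_int n"]
      by (simp add: F_def cis_conv_exp[symmetric] mult.commute mult.left_commute)
    ultimately show ?thesis unfolding eq using False by (simp add: integral_unique)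
  qed
qed

lemma measurable_powi [measurable]: "(\<lambda>z::complex. z powi n) \<in> borel_measurable borel"
  unfolding power_int_def by measurable

lemma integral_circle_measure_powi:
  "integral\<^sup>L circle_measure (\<lambda>z. z powi n) = (if n = 0 then 1 else 0)"
proof -
  have "integral\<^sup>L circle_measure (\<lambda>z. z powi n) = (1/(2*pi)) *\<^sub>R (LINT t:{0..2*pi}|lborel. cis t powi n)"
    by (rule integral_circle_measure) measurable
  also have "\<dots> = (1/(2*pi)) *\<^sub>R (LINT t:{0..2*pi}|lborel. cis (of_int n * t))"
    by (simp add: cis_power_int)
  also have "\<dots> = (if n = 0 then 1 else 0)"
    by (simp add: set_integral_cis_multiple scaleR_conv_of_real)
  finally show ?thesis .
qed

section \<open>The space $L^2(\mathbb{T})$\<close>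

lemma measurable_cnj [measurable (raw)]:
  "f \<in> borel_measurable M \<Longrightarrow> (\<lambda>x. cnj (f x)) \<in> borel_measurable M"
  using measurable_compose[OF _ borel_measurable_continuous_onI[OF continuous_on_cnj[OF continuous_on_id]]]
  by blast

lemma measurable_poly [measurable]: "(\<lambda>z::complex. poly p z) \<in> borel_measurable borel"
  by (intro borel_measurable_continuous_onI continuous_intros)

lemma L2T_measurable [measurable_dest]: "f \<in> L2T \<Longrightarrow> f \<in> borel_measurable borel"
  by (simp add: L2T_def)

lemma L2T_integrable_norm_sq: "f \<in> L2T \<Longrightarrow> integrable circle_measure (\<lambda>z. (cmod (f z))^2)"
  by (simp add: L2T_def)

lemma L2T_dominated:
  assumes "f \<in> L2T" "h \<in> borel_measurable borel"
    and "AE z in circle_measure. cmod (h z) \<le> C * cmod (f z)"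
  shows "h \<in> L2T"
proof -
  have int: "integrable circle_measure (\<lambda>z. C^2 * (cmod (f z))^2)"
    using L2T_integrable_norm_sq[OF assms(1)] by simp
  have bound: "AE z in circle_measure. norm ((cmod (h z))^2) \<le> norm (C^2 * (cmod (f z))^2)"
    using assms(3)
  proof eventually_elim
    case (elim z)
    have "(cmod (h z))^2 \<le> (C * cmod (f z))^2"
      using elim by (intro power_mono) auto
    then show ?case by (simp add: power_mult_distrib)
  qed
  have "integrable circle_measure (\<lambda>z. (cmod (h z))^2)"
    using assms(2) by (intro Bochner_Integration.integrable_bound[OF int _ bound]) measurable
  with assms(2) show ?thesis by (simp add: L2T_def)
qed

lemma L2T_const [simp, intro]: "(\<lambda>z. c) \<in> L2T"
  by (simp add: L2T_def)

lemma L2T_bounded: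
  assumes "h \<in> borel_measurable borel" "AE z in circle_measure. cmod (h z) \<le> C"
  shows "h \<in> L2T"
  using assms by (intro L2T_dominated[OF L2T_const[of 1], where C=C]) auto

lemma L2T_powi [simp, intro]: "(\<lambda>z. z powi n) \<in> L2T"
  by (rule L2T_bounded[where C=1]) (use AE_circle_measure_norm in \<open>auto simp: norm_power_int\<close>)

lemma L2T_power [simp, intro]: "(\<lambda>z. z ^ k) \<in> L2T"
  using L2T_powi[of "int k"] by simp

lemma integrable_L2T_mult:
  assumes "f \<in> L2T" "g \<in> L2T"
  shows "integrable circle_measure (\<lambda>z. f z * g z)"
proof (rule Bochner_Integration.integrable_bound)
  show "integrable circle_measure (\<lambda>z. (cmod (f z))^2 + (cmod (g z))^2)"
    using assms by (simp add: L2T_integrable_norm_sq)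
  show "AE z in circle_measure. norm (f z * g z) \<le> norm ((cmod (f z))^2 + (cmod (g z))^2)"
  proof (rule AE_I2)
    fix z
    have "cmod (f z) * cmod (g z) \<le> (cmod (f z))^2 + (cmod (g z))^2"
      using sum_squares_bound[of "cmod (f z)" "cmod (g z)"]
        mult_nonneg_nonneg[OF norm_ge_zero norm_ge_zero, of "f z" "g z"]
      by linarith
    then show "norm (f z * g z) \<le> norm ((cmod (f z))^2 + (cmod (g z))^2)"
      by (simp add: norm_mult)
  qed
qed (use assms in auto)

lemma L2T_cnj_iff [simp]: "(\<lambda>z. cnj (f z)) \<in> L2T \<longleftrightarrow> f \<in> L2T"
proof -
  have "(\<lambda>z. cnj (f z)) \<in> borel_measurable borel \<longleftrightarrow> f \<in> borel_measurable borel"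
    using measurable_cnj[of "\<lambda>z. cnj (f z)" borel] measurable_cnj[of f borel] by (auto simp only: complex_cnj_cnj)
  then show ?thesis by (simp add: L2T_def)
qed

lemma integrable_inner2:
  "f \<in> L2T \<Longrightarrow> g \<in> L2T \<Longrightarrow> integrable circle_measure (\<lambda>z. f z * cnj (g z))"
  by (simp add: integrable_L2T_mult)

lemma integrable_L2T: "f \<in> L2T \<Longrightarrow> integrable circle_measure f"
  using integrable_L2T_mult[OF _ L2T_const[of 1]] by simp

lemma L2T_add [intro]:
  assumes f: "f \<in> L2T" and g: "g \<in> L2T"
  shows "(\<lambda>z. f z + g z) \<in> L2T"
proof -
  have bound: "AE z in circle_measure.
      norm ((cmod (f z + g z))^2) \<le> norm (2 * (cmod (f z))^2 + 2 * (cmod (g z))^2)"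
  proof (rule AE_I2)
    fix z
    have "(cmod (f z + g z))^2 \<le> (cmod (f z) + cmod (g z))^2"
      by (intro power_mono norm_triangle_ineq) auto
    also have "\<dots> \<le> 2 * (cmod (f z))^2 + 2 * (cmod (g z))^2"
      using sum_squares_bound[of "cmod (f z)" "cmod (g z)"] unfolding power2_sum by simp
    finally show "norm ((cmod (f z + g z))^2) \<le> norm (2 * (cmod (f z))^2 + 2 * (cmod (g z))^2)"
      by simp
  qed
  have "(\<lambda>z. (cmod (f z + g z))^2) \<in> borel_measurable borel"
    using f g by measurable
  with f g bound have "integrable circle_measure (\<lambda>z. (cmod (f z + g z))^2)"
    by (intro Bochner_Integration.integrable_bound[of _ "\<lambda>z. 2 * (cmod (f z))^2 + 2 * (cmod (g z))^2", OF _ _ bound])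
       (auto simp: L2T_integrable_norm_sq)
  with f g show ?thesis by (auto simp: L2T_def)
qed

lemma L2T_cmult [intro]: "f \<in> L2T \<Longrightarrow> (\<lambda>z. c * f z) \<in> L2T"
  by (rule L2T_dominated[where C="cmod c"]) (auto simp: norm_mult)

lemma L2T_diff [intro]: "f \<in> L2T \<Longrightarrow> g \<in> L2T \<Longrightarrow> (\<lambda>z. f z - g z) \<in> L2T"
  using L2T_add[of f "\<lambda>z. (-1) * g z"] L2T_cmult[of g "-1"] by simp

lemma L2T_sum [intro]: "(\<And>i. i \<in> S \<Longrightarrow> F i \<in> L2T) \<Longrightarrow> (\<lambda>z. \<Sum>i\<in>S. F i z) \<in> L2T"
  by (induction S rule: infinite_finite_induct) auto

lemma LinfT_mult_L2T:
  assumes "g \<in> LinfT" and f: "f \<in> L2T"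
  shows "(\<lambda>z. g z * f z) \<in> L2T"
proof -
  obtain C where C: "AE z in circle_measure. cmod (g z) \<le> C"
    and [measurable]: "g \<in> borel_measurable borel"
    using assms(1) by (auto simp: LinfT_def)
  have [measurable]: "f \<in> borel_measurable borel"
    using f by (rule L2T_measurable)
  have bound: "AE z in circle_measure. cmod (g z * f z) \<le> C * cmod (f z)"
    using C by eventually_elim (simp add: norm_mult mult_right_mono)
  show ?thesis
    by (rule L2T_dominated[OF f _ bound]) measurable
qed

lemma L2T_power_mult:
  assumes u: "u \<in> L2T"
  shows "(\<lambda>z. z ^ n * u z) \<in> L2T"
proof -
  have [measurable]: "u \<in> borel_measurable borel"
    using u by (rule L2T_measurable)
  have bound: "AE z in circle_measure. cmod (z ^ n * u z) \<le> 1 * cmod (u z)"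
    using AE_circle_measure_norm by eventually_elim (simp add: norm_mult norm_power)
  show ?thesis
    by (rule L2T_dominated[OF u _ bound]) measurable
qed

lemma norm2_nonneg [simp]: "0 \<le> norm2 f"
  unfolding norm2_def by simp

lemma power2_norm2: "(norm2 f)^2 = integral\<^sup>L circle_measure (\<lambda>z. (cmod (f z))^2)"
  unfolding norm2_def by simp

lemma inner2_self: "inner2 f f = of_real ((norm2 f)^2)"
proof -
  have "(\<lambda>z. f z * cnj (f z)) = (\<lambda>z. of_real ((cmod (f z))^2))"
    by (simp only: complex_norm_square)
  then show ?thesis
    unfolding inner2_def power2_norm2 by (simp only: integral_complex_of_real)
qed

lemma inner2_commute: "inner2 g f = cnj (inner2 f g)"
proof -
  have "(\<lambda>z. g z * cnj (f z)) = (\<lambda>z. cnj (f z * cnj (g z)))"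
    by (simp add: fun_eq_iff mult.commute)
  then show ?thesis
    unfolding inner2_def by (simp only: Bochner_Integration.integral_cnj)
qed

lemma power2_norm2_eq_Re_inner2: "(norm2 f)^2 = Re (inner2 f f)"
  by (simp add: inner2_self)

lemma inner2_cmult_left: "inner2 (\<lambda>z. c * f z) h = c * inner2 f h"
  unfolding inner2_def by (simp add: mult.assoc)

lemma inner2_cmult_right: "inner2 h (\<lambda>z. c * f z) = cnj c * inner2 h f"
  unfolding inner2_def by (simp add: mult.assoc mult.left_commute)

lemma inner2_add_left:
  "f \<in> L2T \<Longrightarrow> g \<in> L2T \<Longrightarrow> h \<in> L2T \<Longrightarrow> inner2 (\<lambda>z. f z + g z) h = inner2 f h + inner2 g h"
  unfolding inner2_def by (simp add: distrib_right integrable_inner2)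

lemma inner2_diff_left:
  "f \<in> L2T \<Longrightarrow> g \<in> L2T \<Longrightarrow> h \<in> L2T \<Longrightarrow> inner2 (\<lambda>z. f z - g z) h = inner2 f h - inner2 g h"
  unfolding inner2_def by (simp add: left_diff_distrib integrable_inner2)

lemma inner2_add_right:
  "f \<in> L2T \<Longrightarrow> g \<in> L2T \<Longrightarrow> h \<in> L2T \<Longrightarrow> inner2 h (\<lambda>z. f z + g z) = inner2 h f + inner2 h g"
  by (subst (1 2 3) inner2_commute) (simp add: inner2_add_left)

lemma inner2_diff_right:
  "f \<in> L2T \<Longrightarrow> g \<in> L2T \<Longrightarrow> h \<in> L2T \<Longrightarrow> inner2 h (\<lambda>z. f z - g z) = inner2 h f - inner2 h g"
  by (subst (1 2 3) inner2_commute) (simp add: inner2_diff_left)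

lemma inner2_sum_left:
  "(\<And>i. i \<in> S \<Longrightarrow> F i \<in> L2T) \<Longrightarrow> h \<in> L2T \<Longrightarrow>
     inner2 (\<lambda>z. \<Sum>i\<in>S. F i z) h = (\<Sum>i\<in>S. inner2 (F i) h)"
proof (induction S rule: infinite_finite_induct)
  case (insert x F)
  then show ?case by (simp add: inner2_add_left L2T_sum)
qed (auto simp: inner2_def)

lemma inner2_sum_right:
  "(\<And>i. i \<in> S \<Longrightarrow> F i \<in> L2T) \<Longrightarrow> h \<in> L2T \<Longrightarrow>
     inner2 h (\<lambda>z. \<Sum>i\<in>S. F i z) = (\<Sum>i\<in>S. inner2 h (F i))"
  by (subst inner2_commute) (simp add: inner2_sum_left inner2_commute[of h])

lemma inner2_cong_AE:
  assumes "f \<in> L2T" "f' \<in> L2T" "g \<in> L2T" "g' \<in> L2T"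
    and "AE z in circle_measure. f z = f' z" "AE z in circle_measure. g z = g' z"
  shows "inner2 f g = inner2 f' g'"
proof -
  have "AE z in circle_measure. f z * cnj (g z) = f' z * cnj (g' z)"
    using assms(5,6) by eventually_elim simp
  with assms(1-4) show ?thesis
    unfolding inner2_def by (intro integral_cong_AE) auto
qed

lemma norm2_cong_AE:
  assumes "f \<in> L2T" "f' \<in> L2T" "AE z in circle_measure. f z = f' z"
  shows "norm2 f = norm2 f'"
proof -
  have "AE z in circle_measure. (cmod (f z))^2 = (cmod (f' z))^2"
    using assms(3) by eventually_elim simp
  with assms(1,2) show ?thesis
    unfolding norm2_def by (subst integral_cong_AE) auto
qed

lemma inner2_Cauchy_Schwarz:
  assumes f: "f \<in> L2T" and g: "g \<in> L2T"
  shows "cmod (inner2 f g) \<le> norm2 f * norm2 g"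
proof -
  define I where "I = integral\<^sup>L circle_measure (\<lambda>z. cmod (f z) * cmod (g z))"
  have nn_sq: "(\<integral>\<^sup>+z. ennreal (cmod (u z)) ^ 2 \<partial>circle_measure) = ennreal ((norm2 u)^2)"
    if "u \<in> L2T" for u
    unfolding power2_norm2 using that
    by (subst nn_integral_eq_integral[symmetric])
       (auto intro!: nn_integral_cong simp: ennreal_power L2T_integrable_norm_sq)
  have "(\<integral>\<^sup>+z. ennreal (cmod (f z)) * ennreal (cmod (g z)) \<partial>circle_measure)^2
      \<le> (\<integral>\<^sup>+z. ennreal (cmod (f z)) ^ 2 \<partial>circle_measure) * (\<integral>\<^sup>+z. ennreal (cmod (g z)) ^ 2 \<partial>circle_measure)"
    using f g by (intro Cauchy_Schwarz_nn_integral) auto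
  moreover have "(\<integral>\<^sup>+z. ennreal (cmod (f z)) * ennreal (cmod (g z)) \<partial>circle_measure) = ennreal I"
    unfolding I_def using integrable_norm[OF integrable_L2T_mult[OF f g]]
    by (subst nn_integral_eq_integral[symmetric])
       (auto intro!: nn_integral_cong simp: ennreal_mult'' norm_mult)
  ultimately have "ennreal I ^ 2 \<le> ennreal ((norm2 f)^2) * ennreal ((norm2 g)^2)"
    using f g by (simp add: nn_sq)
  moreover have "0 \<le> I" unfolding I_def by simp
  ultimately have "ennreal (I^2) \<le> ennreal ((norm2 f)^2 * (norm2 g)^2)"
    by (simp only: ennreal_power ennreal_mult''[symmetric] zero_le_power2)
  then have "I^2 \<le> (norm2 f * norm2 g)^2"
    by (simp add: power_mult_distrib)
  then have "I \<le> norm2 f * norm2 g"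
    by (rule power2_le_imp_le) (simp add: norm2_def)
  moreover have "cmod (inner2 f g) \<le> I"
    unfolding inner2_def I_def
    using integral_norm_bound[of circle_measure "\<lambda>z. f z * cnj (g z)"] by (simp add: norm_mult)
  ultimately show ?thesis by linarith
qed

lemma norm2_triangle:
  assumes f: "f \<in> L2T" and g: "g \<in> L2T"
  shows "norm2 (\<lambda>z. f z + g z) \<le> norm2 f + norm2 g"
proof -
  have "(norm2 (\<lambda>z. f z + g z))^2 = Re (inner2 f f + inner2 f g + (inner2 g f + inner2 g g))"
    unfolding power2_norm2_eq_Re_inner2
    using f g by (simp add: inner2_add_left inner2_add_right L2T_add)
  also have "\<dots> = (norm2 f)^2 + 2 * Re (inner2 f g) + (norm2 g)^2"
    by (simp add: inner2_self inner2_commute[of g f])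
  also have "\<dots> \<le> (norm2 f + norm2 g)^2"
    using complex_Re_le_cmod[of "inner2 f g"] inner2_Cauchy_Schwarz[OF f g]
    by (simp add: power2_sum)
  finally show ?thesis by (rule power2_le_imp_le) (simp add: norm2_def)
qed

lemma norm2_minus_commute: "norm2 (\<lambda>z. f z - g z) = norm2 (\<lambda>z. g z - f z)"
  unfolding norm2_def by (simp add: norm_minus_commute)

lemma norm2_triangle_diff:
  "f \<in> L2T \<Longrightarrow> g \<in> L2T \<Longrightarrow> h \<in> L2T \<Longrightarrow>
     norm2 (\<lambda>z. f z - h z) \<le> norm2 (\<lambda>z. f z - g z) + norm2 (\<lambda>z. g z - h z)"
  using norm2_triangle[of "\<lambda>z. f z - g z" "\<lambda>z. g z - h z"] by auto

lemma norm_inner2_diff_le: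
  "f \<in> L2T \<Longrightarrow> g \<in> L2T \<Longrightarrow> h \<in> L2T \<Longrightarrow>
     cmod (inner2 f h - inner2 g h) \<le> norm2 (\<lambda>z. f z - g z) * norm2 h"
  using inner2_Cauchy_Schwarz[of "\<lambda>z. f z - g z" h] by (simp add: inner2_diff_left L2T_diff)

lemma tendsto_inner2_left:
  assumes "\<And>N. f N \<in> L2T" "u \<in> L2T" "e \<in> L2T"
    and "(\<lambda>N. norm2 (\<lambda>z. f N z - u z)) \<longlonglongrightarrow> 0"
  shows "(\<lambda>N. inner2 (f N) e) \<longlonglongrightarrow> inner2 u e"
proof -
  have "(\<lambda>N. inner2 (f N) e - inner2 u e) \<longlonglongrightarrow> 0"
  proof (rule Lim_null_comparison)
    show "\<forall>\<^sub>F N in sequentially. norm (inner2 (f N) e - inner2 u e) \<le> norm2 (\<lambda>z. f N z - u z) * norm2 e"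
      using norm_inner2_diff_le assms(1-3) by simp
    show "(\<lambda>N. norm2 (\<lambda>z. f N z - u z) * norm2 e) \<longlonglongrightarrow> 0"
      using tendsto_mult_left_zero[OF assms(4)] by simp
  qed
  then show ?thesis by (rule LIM_zero_cancel)
qed

lemma tendsto_inner2_right:
  assumes "\<And>N. f N \<in> L2T" "u \<in> L2T" "e \<in> L2T"
    and "(\<lambda>N. norm2 (\<lambda>z. f N z - u z)) \<longlonglongrightarrow> 0"
  shows "(\<lambda>N. inner2 e (f N)) \<longlonglongrightarrow> inner2 e u"
  using tendsto_cnj[OF tendsto_inner2_left[OF assms]] by (simp add: inner2_commute[of e])

lemma cnj_eq_inverse_if_norm_1: "cmod z = 1 \<Longrightarrow> cnj z = inverse z"
  using divide_conv_cnj[of z 1] by (simp add: divide_inverse)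

lemma cnj_powi_if_norm_1: "cmod z = 1 \<Longrightarrow> cnj z powi k = z powi (- k)"
  by (simp add: cnj_eq_inverse_if_norm_1 norm_power_int power_int_minus power_int_inverse)

section \<open>Uniqueness of Fourier coefficients\<close>

lemma zero_if_norm_le_epsilon_mult:
  fixes x :: "'a::real_normed_vector"
  assumes "\<And>e. e > 0 \<Longrightarrow> norm x \<le> e * A"
  shows "x = 0"
proof -
  have "norm x \<le> 0 + e" if e: "e > 0" for e
  proof (cases "A > 0")
    case True
    then show ?thesis using assms[of "e / A"] e by simp
  next
    case False
    then show ?thesis using assms[of 1] e by (simp add: not_less)
  qed
  then have "norm x \<le> 0" by (rule field_le_epsilon)
  then show ?thesis by simp
qed

lemma tendsto_infdist_cutoff_indicator:
  assumes "closed C" "C \<noteq> {}"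
  shows "(\<lambda>k. max 0 (1 - real k * infdist z C)) \<longlonglongrightarrow> indicator C z"
proof (cases "z \<in> C")
  case True
  then show ?thesis using in_closed_iff_infdist_zero[OF assms] by simp
next
  case False
  then have d: "infdist z C > 0"
    using in_closed_iff_infdist_zero[OF assms, of z] infdist_nonneg[of z C] by linarith
  have "max 0 (1 - real k * infdist z C) = indicator C z" if "nat \<lceil>1 / infdist z C\<rceil> \<le> k" for k
  proof -
    have "1 / infdist z C \<le> real k" using that by linarith
    then have "1 \<le> real k * infdist z C" using d by (simp add: field_simps)
    then show ?thesis using False by simp
  qed
  then have "eventually (\<lambda>k. max 0 (1 - real k * infdist z C) = indicator C z) sequentially"
    unfolding eventually_sequentially by blast
  then show ?thesis by (rule tendsto_eventually)
qed

lemma integral_mult_indicator_closed_eq_0: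
  fixes M :: "'a::metric_space measure" and r :: "'a \<Rightarrow> real"
  assumes sets_M: "sets M = sets borel" and r: "integrable M r"
    and orth: "\<And>\<phi>. continuous_on UNIV \<phi> \<Longrightarrow> integral\<^sup>L M (\<lambda>z. r z * \<phi> z) = 0"
    and C: "closed C"
  shows "integral\<^sup>L M (\<lambda>z. r z * indicator C z) = 0"
proof (cases "C = {}")
  case False
  have [measurable]: "r \<in> borel_measurable borel"
    using borel_measurable_integrable[OF r] unfolding measurable_cong_sets[OF sets_M refl] .
  have [measurable]: "C \<in> sets borel" using C by (rule borel_closed)
  define \<phi> where "\<phi> k z = max 0 (1 - real k * infdist z C)" for k :: nat and z
  have cont: "continuous_on UNIV (\<phi> k)" for k
    unfolding \<phi>_def by (intro continuous_intros)
  have "(\<lambda>k. integral\<^sup>L M (\<lambda>z. r z * \<phi> k z)) \<longlonglongrightarrow> integral\<^sup>L M (\<lambda>z. r z * indicator C z)"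
  proof (rule integral_dominated_convergence[where w="\<lambda>z. norm (r z)"])
    show "AE z in M. (\<lambda>k. r z * \<phi> k z) \<longlonglongrightarrow> r z * indicator C z"
      unfolding \<phi>_def by (intro AE_I2 tendsto_mult_left tendsto_infdist_cutoff_indicator C False)
    show "AE z in M. norm (r z * \<phi> k z) \<le> norm (r z)" for k
    proof (rule AE_I2)
      fix z
      have "\<bar>\<phi> k z\<bar> \<le> 1"
        using infdist_nonneg[of z C] by (auto simp: \<phi>_def abs_if)
      then show "norm (r z * \<phi> k z) \<le> norm (r z)"
        by (simp add: abs_mult mult_left_le)
    qed
    show "(\<lambda>z. r z * \<phi> k z) \<in> borel_measurable M" for k
      using borel_measurable_continuous_onI[OF cont[of k]] by (simp add: measurable_cong_sets[OF sets_M refl])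
    show "(\<lambda>z. r z * indicator C z) \<in> borel_measurable M"
      unfolding measurable_cong_sets[OF sets_M refl] by measurable
    show "integrable M (\<lambda>z. norm (r z))"
      using r by simp
  qed
  moreover have "integral\<^sup>L M (\<lambda>z. r z * \<phi> k z) = 0" for k
    by (rule orth[OF cont])
  ultimately have "(\<lambda>k. 0) \<longlonglongrightarrow> integral\<^sup>L M (\<lambda>z. r z * indicator C z)"
    by simp
  then show ?thesis
    using LIMSEQ_unique[OF tendsto_const] by metis
qed simp

lemma emeasure_density_integrable_real:
  fixes s :: "'a \<Rightarrow> real"
  assumes s: "integrable M s" and [measurable]: "C \<in> sets M"
  shows "emeasure (density M (\<lambda>z. ennreal (s z))) C = ennreal (integral\<^sup>L M (\<lambda>z. max 0 (s z) * indicator C z))"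
proof -
  have [measurable]: "s \<in> borel_measurable M" using s by (rule borel_measurable_integrable)
  have "integrable M (\<lambda>z. max 0 (s z) * indicator C z)"
    by (rule Bochner_Integration.integrable_bound[OF s]) (auto simp: indicator_def)
  then have "(\<integral>\<^sup>+z. ennreal (max 0 (s z) * indicator C z) \<partial>M) = ennreal (integral\<^sup>L M (\<lambda>z. max 0 (s z) * indicator C z))"
    by (rule nn_integral_eq_integral) auto
  moreover have "emeasure (density M (\<lambda>z. ennreal (s z))) C = (\<integral>\<^sup>+z. ennreal (max 0 (s z) * indicator C z) \<partial>M)"
    by (subst emeasure_density) (auto intro!: nn_integral_cong simp: indicator_def ennreal_neg max_def)
  ultimately show ?thesis by simp
qed

lemma AE_zero_if_integral_mult_continuous_eq_0:
  fixes M :: "'a::metric_space measure" and r :: "'a \<Rightarrow> real"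
  assumes "sigma_finite_measure M" and sets_M: "sets M = sets borel" and r: "integrable M r"
    and orth: "\<And>\<phi>. continuous_on UNIV \<phi> \<Longrightarrow> integral\<^sup>L M (\<lambda>z. r z * \<phi> z) = 0"
  shows "AE z in M. r z = 0"
proof -
  interpret sigma_finite_measure M by fact
  have [measurable]: "r \<in> borel_measurable M" using r by (rule borel_measurable_integrable)
  let ?pos = "density M (\<lambda>z. ennreal (r z))" and ?neg = "density M (\<lambda>z. ennreal (- r z))"
  have closed_eq: "emeasure ?pos C = emeasure ?neg C" if C: "closed C" for C
  proof -
    have [measurable]: "C \<in> sets M" using borel_closed[OF C] sets_M by simp
    have "integral\<^sup>L M (\<lambda>z. max 0 (r z) * indicator C z) - integral\<^sup>L M (\<lambda>z. max 0 (- r z) * indicator C z)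
        = integral\<^sup>L M (\<lambda>z. r z * indicator C z)"
      by (subst Bochner_Integration.integral_diff[symmetric])
         (auto intro!: Bochner_Integration.integrable_bound[OF r] Bochner_Integration.integral_cong
               simp: indicator_def max_def)
    also have "\<dots> = 0" by (rule integral_mult_indicator_closed_eq_0[OF sets_M r orth C])
    finally show ?thesis using r by (simp add: emeasure_density_integrable_real)
  qed
  have "?pos = ?neg"
  proof (rule measure_eqI_generator_eq[where E="Collect closed" and \<Omega>=UNIV and A="\<lambda>_. UNIV"])
    have "sets M = sigma_sets UNIV (Collect closed)"
      unfolding sets_M by (subst borel_eq_closed) simp
    then show "sets ?pos = sigma_sets UNIV (Collect closed)" "sets ?neg = sigma_sets UNIV (Collect closed)"
      by simp_all
    show "emeasure ?pos UNIV \<noteq> \<infinity>" for i :: nat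
      using emeasure_density_integrable_real[OF r, of UNIV] sets_M by (simp add: sets.top[of M, simplified space_borel])
  qed (auto simp: Int_stable_def closed_Int closed_eq)
  then have "AE z in M. ennreal (r z) = ennreal (- r z)"
    by (rule density_unique[rotated 2]) auto
  then show ?thesis
  proof eventually_elim
    case (elim z)
    show ?case
    proof (cases "0 \<le> r z")
      case True
      then have "ennreal (r z) = 0" using elim by (simp add: ennreal_neg)
      with True show ?thesis by (simp add: ennreal_eq_0_iff)
    next
      case False
      then have "ennreal (- r z) = 0" using elim by (simp add: ennreal_neg)
      with False show ?thesis by (simp add: ennreal_eq_0_iff)
    qed
  qed
qed

lemma fourier_coeff_eq_inner2:
  assumes "f \<in> borel_measurable borel"
  shows "fourier_coeff f n = inner2 f (\<lambda>z. z powi n)"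
  unfolding fourier_coeff_def inner2_def
proof (rule integral_cong_AE)
  show "AE z in circle_measure. f z * z powi - n = f z * cnj (z powi n)"
    using AE_circle_measure_norm by eventually_elim (simp add: cnj_powi_if_norm_1)
qed (use assms in \<open>auto simp del: power_int_minus\<close>)

lemma inner2_powi: "inner2 (\<lambda>z. z powi j) (\<lambda>z. z powi k) = (if j = k then 1 else 0)"
proof -
  have "AE z in circle_measure. z powi j * cnj (z powi k) = z powi (j - k)"
    using AE_circle_measure_norm
  proof eventually_elim
    case (elim z)
    then have "z \<noteq> 0" by auto
    then show ?case
      using elim power_int_add[of z j "- k"] by (simp add: cnj_powi_if_norm_1 del: power_int_minus)
  qed
  then have "inner2 (\<lambda>z. z powi j) (\<lambda>z. z powi k) = integral\<^sup>L circle_measure (\<lambda>z. z powi (j - k))"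
    unfolding inner2_def by (intro integral_cong_AE) (auto simp del: power_int_minus)
  then show ?thesis by (simp add: integral_circle_measure_powi)
qed

definition laurent_on_circle :: "(complex \<Rightarrow> real) \<Rightarrow> bool" where
  "laurent_on_circle g \<longleftrightarrow>
     (\<exists>p::complex poly. \<exists>N::nat. \<forall>z. cmod z = 1 \<longrightarrow> of_real (g z) * z^N = poly p z)"

lemma laurent_on_circle_const: "laurent_on_circle (\<lambda>z. c)"
  unfolding laurent_on_circle_def by (rule exI[of _ "[:of_real c:]"], rule exI[of _ 0]) simp

text \<open>On the circle $\mathrm{Re}\, z = (z + z^{-1})/2$ and $\mathrm{Im}\, z = (z - z^{-1})/(2i)$.\<close>
lemma laurent_on_circle_linear:
  assumes "bounded_linear f"
  shows "laurent_on_circle f"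
  unfolding laurent_on_circle_def
proof (intro exI allI impI)
  interpret bounded_linear f by fact
  define a where "a = complex_of_real (f 1)"
  define b where "b = complex_of_real (f \<i>)"
  fix z :: complex assume z: "cmod z = 1"
  then have "z \<noteq> 0" by auto
  have "z = Re z *\<^sub>R 1 + Im z *\<^sub>R \<i>"
    by (simp add: complex_eq_iff)
  then have "f z = f (Re z *\<^sub>R 1 + Im z *\<^sub>R \<i>)"
    by simp
  then have "of_real (f z) * z^1 = (of_real (Re z) * a + of_real (Im z) * b) * z"
    by (simp add: add scaleR a_def b_def algebra_simps)
  also have "complex_of_real (Re z) = (z + inverse z) / 2"
    using complex_add_cnj[of z] cnj_eq_inverse_if_norm_1[OF z] by simp
  also have "complex_of_real (Im z) = (z - inverse z) / (2 * \<i>)"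
    using complex_diff_cnj[of z] cnj_eq_inverse_if_norm_1[OF z] by (simp add: field_simps)
  also have "((z + inverse z) / 2 * a + (z - inverse z) / (2 * \<i>) * b) * z
      = poly [: a/2 - b/(2*\<i>), 0, a/2 + b/(2*\<i>) :] z"
    using \<open>z \<noteq> 0\<close> by (simp add: field_simps power2_eq_square)
  finally show "of_real (f z) * z^1 = poly [: a/2 - b/(2*\<i>), 0, a/2 + b/(2*\<i>) :] z" .
qed

lemma laurent_on_circle_add:
  assumes "laurent_on_circle f" "laurent_on_circle g"
  shows "laurent_on_circle (\<lambda>z. f z + g z)"
proof -
  obtain p N q M where
    p: "\<forall>z. cmod z = 1 \<longrightarrow> of_real (f z) * z^N = poly p z" and
    q: "\<forall>z. cmod z = 1 \<longrightarrow> of_real (g z) * z^M = poly q z"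
    using assms unfolding laurent_on_circle_def by blast
  have "of_real (f z + g z) * z^(N+M) = poly (p * monom 1 M + q * monom 1 N) z" if "cmod z = 1" for z
  proof -
    have "of_real (f z + g z) * z^(N+M) = (of_real (f z) * z^N) * z^M + (of_real (g z) * z^M) * z^N"
      by (simp add: power_add algebra_simps)
    also have "\<dots> = poly (p * monom 1 M + q * monom 1 N) z"
      using p q that by (simp add: poly_monom)
    finally show ?thesis .
  qed
  then show ?thesis
    unfolding laurent_on_circle_def by blast
qed

lemma laurent_on_circle_mult:
  assumes "laurent_on_circle f" "laurent_on_circle g"
  shows "laurent_on_circle (\<lambda>z. f z * g z)"
proof -
  obtain p N q M where
    p: "\<forall>z. cmod z = 1 \<longrightarrow> of_real (f z) * z^N = poly p z" and
    q: "\<forall>z. cmod z = 1 \<longrightarrow> of_real (g z) * z^M = poly q z"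
    using assms unfolding laurent_on_circle_def by blast
  have "of_real (f z * g z) * z^(N+M) = poly (p * q) z" if "cmod z = 1" for z
  proof -
    have "of_real (f z * g z) * z^(N+M) = (of_real (f z) * z^N) * (of_real (g z) * z^M)"
      by (simp add: power_add algebra_simps)
    also have "\<dots> = poly (p * q) z"
      using p q that by simp
    finally show ?thesis .
  qed
  then show ?thesis
    unfolding laurent_on_circle_def by blast
qed

lemma real_polynomial_function_laurent_on_circle:
  "real_polynomial_function g \<Longrightarrow> laurent_on_circle g"
  by (induction rule: real_polynomial_function.induct)
     (auto intro: laurent_on_circle_const laurent_on_circle_linear laurent_on_circle_add laurent_on_circle_mult)

lemma measurable_real_polynomial_function:
  fixes g :: "complex \<Rightarrow> real"
  assumes "real_polynomial_function g"
  shows "g \<in> borel_measurable borel"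
  using assms continuous_on_polymonial_function[of g UNIV] real_polynomial_function_eq
  by (auto intro: borel_measurable_continuous_onI)

lemma integrable_mult_powi:
  assumes "integrable circle_measure G"
  shows "integrable circle_measure (\<lambda>z. G z * z powi k)"
proof (rule Bochner_Integration.integrable_bound[OF assms])
  show "AE z in circle_measure. norm (G z * z powi k) \<le> norm (G z)"
    using AE_circle_measure_norm by eventually_elim (simp add: norm_mult norm_power_int)
qed (use borel_measurable_integrable[OF assms] in simp)

lemma integral_mult_poly_powi_eq_0:
  assumes G: "integrable circle_measure G" and coeff: "\<And>n. fourier_coeff G n = 0"
  shows "integral\<^sup>L circle_measure (\<lambda>z. G z * (poly p z * z powi (- int N))) = 0"
proof -
  have [measurable]: "G \<in> borel_measurable borel"
    using borel_measurable_integrable[OF G] by simp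
  have "AE z in circle_measure. G z * (poly p z * z powi (- int N)) =
      (\<Sum>i\<le>degree p. coeff p i * (G z * z powi (- (int N - int i))))"
    using AE_circle_measure_norm
  proof eventually_elim
    case (elim z)
    then have "z \<noteq> 0" by auto
    then have "z ^ i * z powi (- int N) = z powi (- (int N - int i))" for i
      using power_int_add[of z "int i" "- int N"] by (simp del: power_int_minus)
    then show ?case
      by (simp add: poly_altdef sum_distrib_left sum_distrib_right mult_ac del: power_int_minus)
  qed
  then have "integral\<^sup>L circle_measure (\<lambda>z. G z * (poly p z * z powi (- int N))) =
      integral\<^sup>L circle_measure (\<lambda>z. \<Sum>i\<le>degree p. coeff p i * (G z * z powi (- (int N - int i))))"
    by (intro integral_cong_AE) (auto simp del: power_int_minus)
  also have "\<dots> = (\<Sum>i\<le>degree p. coeff p i * fourier_coeff G (int N - int i))"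
    unfolding fourier_coeff_def
    by (subst Bochner_Integration.integral_sum) (auto intro!: integrable_mult_powi G)
  also have "\<dots> = 0" by (simp add: coeff)
  finally show ?thesis .
qed

lemma integral_mult_real_polynomial_function_eq_0:
  fixes g :: "complex \<Rightarrow> real"
  assumes G: "integrable circle_measure G" and coeff: "\<And>n. fourier_coeff G n = 0"
    and g: "real_polynomial_function g"
  shows "integral\<^sup>L circle_measure (\<lambda>z. G z * of_real (g z)) = 0"
proof -
  obtain p N where pN: "\<forall>z. cmod z = 1 \<longrightarrow> of_real (g z) * z^N = poly p z"
    using real_polynomial_function_laurent_on_circle[OF g] unfolding laurent_on_circle_def by blast
  have [measurable]: "g \<in> borel_measurable borel"
    by (rule measurable_real_polynomial_function[OF g])
  have [measurable]: "G \<in> borel_measurable borel"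
    using borel_measurable_integrable[OF G] by simp
  have "AE z in circle_measure. G z * of_real (g z) = G z * (poly p z * z powi (- int N))"
    using AE_circle_measure_norm
  proof eventually_elim
    case (elim z)
    then have "z \<noteq> 0" by auto
    with elim have "of_real (g z) = poly p z / z^N" using pN by (auto simp: field_simps)
    then show ?case by (simp add: power_int_minus divide_inverse)
  qed
  then have "integral\<^sup>L circle_measure (\<lambda>z. G z * of_real (g z)) =
      integral\<^sup>L circle_measure (\<lambda>z. G z * (poly p z * z powi (- int N)))"
    by (intro integral_cong_AE) (auto simp del: power_int_minus)
  also have "\<dots> = 0" by (rule integral_mult_poly_powi_eq_0[OF G coeff])
  finally show ?thesis .
qed

lemma integral_mult_bounded_on_circle:
  fixes G :: "complex \<Rightarrow> complex" and \<phi> :: "complex \<Rightarrow> real"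
  assumes G: "integrable circle_measure G" and [measurable]: "\<phi> \<in> borel_measurable borel"
    and bound: "\<And>z. cmod z = 1 \<Longrightarrow> \<bar>\<phi> z\<bar> \<le> B"
  shows "integrable circle_measure (\<lambda>z. G z * of_real (\<phi> z))"
    and "cmod (integral\<^sup>L circle_measure (\<lambda>z. G z * of_real (\<phi> z)))
           \<le> B * integral\<^sup>L circle_measure (\<lambda>z. cmod (G z))"
proof -
  have [measurable]: "G \<in> borel_measurable borel"
    using borel_measurable_integrable[OF G] by simp
  have pointwise: "AE z in circle_measure. cmod (G z * of_real (\<phi> z)) \<le> B * cmod (G z)"
    using AE_circle_measure_norm
  proof eventually_elim
    case (elim z)
    have "\<bar>\<phi> z\<bar> * cmod (G z) \<le> B * cmod (G z)"
      by (rule mult_right_mono) (simp_all add: bound elim)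
    then show ?case by (simp add: norm_mult mult.commute)
  qed
  have int_B: "integrable circle_measure (\<lambda>z. B * cmod (G z))"
    using G by simp
  show int: "integrable circle_measure (\<lambda>z. G z * of_real (\<phi> z))"
    by (rule Bochner_Integration.integrable_bound[OF int_B])
       (use pointwise in \<open>auto elim!: eventually_mono\<close>)
  have "cmod (integral\<^sup>L circle_measure (\<lambda>z. G z * of_real (\<phi> z)))
      \<le> integral\<^sup>L circle_measure (\<lambda>z. cmod (G z * of_real (\<phi> z)))"
    by (rule integral_norm_bound)
  also have "\<dots> \<le> integral\<^sup>L circle_measure (\<lambda>z. B * cmod (G z))"
    using int int_B pointwise by (intro integral_mono_AE) auto
  finally show "cmod (integral\<^sup>L circle_measure (\<lambda>z. G z * of_real (\<phi> z)))
           \<le> B * integral\<^sup>L circle_measure (\<lambda>z. cmod (G z))"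
    by simp
qed

lemma integrable_mult_continuous:
  fixes G :: "complex \<Rightarrow> complex" and \<phi> :: "complex \<Rightarrow> real"
  assumes G: "integrable circle_measure G" and \<phi>: "continuous_on UNIV \<phi>"
  shows "integrable circle_measure (\<lambda>z. G z * of_real (\<phi> z))"
proof -
  have "bounded (\<phi> ` sphere 0 1)"
    by (intro compact_imp_bounded compact_continuous_image continuous_on_subset[OF \<phi>] compact_sphere) simp
  then obtain B where "\<forall>z\<in>sphere 0 1. \<bar>\<phi> z\<bar> \<le> B"
    unfolding bounded_iff by auto
  then have "\<And>z. cmod z = 1 \<Longrightarrow> \<bar>\<phi> z\<bar> \<le> B"
    by simp
  moreover have "\<phi> \<in> borel_measurable borel"
    using \<phi> by (rule borel_measurable_continuous_onI)
  ultimately show ?thesis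
    by (intro integral_mult_bounded_on_circle(1)[OF G])
qed

lemma integral_mult_continuous_eq_0:
  fixes \<phi> :: "complex \<Rightarrow> real"
  assumes G: "integrable circle_measure G" and coeff: "\<And>n. fourier_coeff G n = 0"
    and \<phi>: "continuous_on UNIV \<phi>"
  shows "integral\<^sup>L circle_measure (\<lambda>z. G z * of_real (\<phi> z)) = 0"
proof (rule zero_if_norm_le_epsilon_mult)
  have [measurable]: "\<phi> \<in> borel_measurable borel"
    using \<phi> by (rule borel_measurable_continuous_onI)
  fix e :: real assume e: "e > 0"
  obtain g where g: "polynomial_function g" and approx: "\<forall>z\<in>sphere 0 1. norm (\<phi> z - g z) < e"
    using Stone_Weierstrass_polynomial_function[OF compact_sphere continuous_on_subset[OF \<phi>] e] by blast
  have rg: "real_polynomial_function g"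
    using g real_polynomial_function_eq by blast
  have [measurable]: "g \<in> borel_measurable borel"
    by (rule measurable_real_polynomial_function[OF rg])
  have diff_bound: "\<bar>\<phi> z - g z\<bar> \<le> e" if "cmod z = 1" for z
    using approx that by (auto intro: less_imp_le)
  note diff = integral_mult_bounded_on_circle[of G "\<lambda>z. \<phi> z - g z", OF G _ diff_bound]
  have "(\<lambda>z. G z * of_real (g z)) = (\<lambda>z. G z * of_real (\<phi> z) - G z * of_real (\<phi> z - g z))"
    by (simp add: fun_eq_iff algebra_simps)
  then have int_g: "integrable circle_measure (\<lambda>z. G z * of_real (g z))"
    using integrable_mult_continuous[OF G \<phi>] diff(1) by simp
  have "(\<lambda>z. G z * of_real (\<phi> z)) = (\<lambda>z. G z * of_real (\<phi> z - g z) + G z * of_real (g z))"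
    by (simp add: fun_eq_iff algebra_simps)
  then have "integral\<^sup>L circle_measure (\<lambda>z. G z * of_real (\<phi> z))
      = integral\<^sup>L circle_measure (\<lambda>z. G z * of_real (\<phi> z - g z))
        + integral\<^sup>L circle_measure (\<lambda>z. G z * of_real (g z))"
    using Bochner_Integration.integral_add[OF diff(1) int_g] by simp
  also have "\<dots> = integral\<^sup>L circle_measure (\<lambda>z. G z * of_real (\<phi> z - g z))"
    using integral_mult_real_polynomial_function_eq_0[OF G coeff rg] by simp
  finally show "norm (integral\<^sup>L circle_measure (\<lambda>z. G z * of_real (\<phi> z)))
      \<le> e * integral\<^sup>L circle_measure (\<lambda>z. cmod (G z))"
    using diff(2) by simp
qed

theorem fourier_coeff_unique:
  assumes G: "integrable circle_measure G" and coeff: "\<And>n. fourier_coeff G n = 0"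
  shows "AE z in circle_measure. G z = 0"
proof -
  have "sigma_finite_measure circle_measure"
    by unfold_locales
  note AE_zero = AE_zero_if_integral_mult_continuous_eq_0[OF this sets_circle_measure]
  have "AE z in circle_measure. Re (G z) = 0"
  proof (rule AE_zero)
    fix \<phi> :: "complex \<Rightarrow> real" assume \<phi>: "continuous_on UNIV \<phi>"
    show "integral\<^sup>L circle_measure (\<lambda>z. Re (G z) * \<phi> z) = 0"
      using integral_Re[OF integrable_mult_continuous[OF G \<phi>]]
        integral_mult_continuous_eq_0[OF G coeff \<phi>] by simp
  qed (use G in simp)
  moreover have "AE z in circle_measure. Im (G z) = 0"
  proof (rule AE_zero)
    fix \<phi> :: "complex \<Rightarrow> real" assume \<phi>: "continuous_on UNIV \<phi>"
    show "integral\<^sup>L circle_measure (\<lambda>z. Im (G z) * \<phi> z) = 0"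
      using integral_Im[OF integrable_mult_continuous[OF G \<phi>]]
        integral_mult_continuous_eq_0[OF G coeff \<phi>] by simp
  qed (use G in simp)
  ultimately show ?thesis
    by eventually_elim (simp add: complex_eq_iff)
qed

section \<open>Completeness of $L^2(\mathbb{T})$\<close>

lemma norm2_const: "norm2 (\<lambda>z. c) = cmod c"
  unfolding norm2_def by simp

lemma integral_norm_le_norm2:
  assumes g: "g \<in> L2T"
  shows "integral\<^sup>L circle_measure (\<lambda>z. cmod (g z)) \<le> norm2 g"
proof -
  have g_abs: "(\<lambda>z. complex_of_real (cmod (g z))) \<in> L2T"
    by (rule L2T_dominated[OF g, where C=1]) (use g in auto)
  have "integral\<^sup>L circle_measure (\<lambda>z. cmod (g z)) = Re (inner2 (\<lambda>z. complex_of_real (cmod (g z))) (\<lambda>z. 1))"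
    unfolding inner2_def by simp
  also have "\<dots> \<le> norm2 (\<lambda>z. complex_of_real (cmod (g z))) * norm2 (\<lambda>z. 1)"
    using complex_Re_le_cmod inner2_Cauchy_Schwarz[OF g_abs L2T_const] by (rule order_trans)
  also have "\<dots> = norm2 g"
    by (simp add: norm2_const) (simp add: norm2_def)
  finally show ?thesis .
qed

lemma norm2_telescope:
  assumes f: "\<And>n. f n \<in> L2T" and fast: "\<And>n. norm2 (\<lambda>z. f (Suc n) z - f n z) \<le> (1/2)^n"
  shows "norm2 (\<lambda>z. f (N + m) z - f m z) \<le> 2 * (1/2)^m - 2 * (1/2)^(m+N)"
proof (induction N)
  case (Suc N)
  have "norm2 (\<lambda>z. f (Suc N + m) z - f m z)
      \<le> norm2 (\<lambda>z. f (Suc (N + m)) z - f (N + m) z) + norm2 (\<lambda>z. f (N + m) z - f m z)"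
    using norm2_triangle_diff[of "f (Suc (N+m))" "f (N+m)" "f m"] f by simp
  also have "\<dots> \<le> (1/2)^(N+m) + (2 * (1/2)^m - 2 * (1/2)^(m+N))"
    using fast[of "N+m"] Suc.IH by simp
  also have "\<dots> = 2 * (1/2)^m - 2 * (1/2)^(m + Suc N)"
    by (simp add: add.commute)
  finally show ?case .
qed (simp add: norm2_def)

lemma convergent_if_summable_norm_diff:
  fixes f :: "nat \<Rightarrow> 'a::banach"
  assumes "summable (\<lambda>n. norm (f (Suc n) - f n))"
  shows "convergent f"
proof -
  have "convergent (\<lambda>n. \<Sum>i<n. f (Suc i) - f i)"
    using summable_norm_cancel[OF assms] by (simp add: summable_iff_convergent)
  then have "convergent (\<lambda>n. f n - f 0)"
    using sum_lessThan_telescope[of f] by simp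
  then have "convergent (\<lambda>n. (f n - f 0) + f 0)"
    by (intro convergent_add convergent_const)
  then show ?thesis by simp
qed

lemma AE_convergent_if_norm2_geometric:
  assumes f: "\<And>n. f n \<in> L2T" and fast: "\<And>n. norm2 (\<lambda>z. f (Suc n) z - f n z) \<le> (1/2)^n"
  shows "AE z in circle_measure. convergent (\<lambda>n. f n z)"
proof -
  define D where "D n z = cmod (f (Suc n) z - f n z)" for n z
  have [measurable]: "f n \<in> borel_measurable borel" for n
    using f[of n] by (rule L2T_measurable)
  have [measurable]: "D n \<in> borel_measurable borel" for n
    unfolding D_def by measurable
  have "(\<integral>\<^sup>+z. ennreal (D n z) \<partial>circle_measure) \<le> ennreal ((1/2)^n)" for n
  proof -
    have diff: "(\<lambda>z. f (Suc n) z - f n z) \<in> L2T" using f by auto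
    have "(\<integral>\<^sup>+z. ennreal (D n z) \<partial>circle_measure) = ennreal (integral\<^sup>L circle_measure (D n))"
      unfolding D_def using integrable_L2T[OF diff] by (intro nn_integral_eq_integral) auto
    also have "integral\<^sup>L circle_measure (D n) \<le> (1/2)^n"
      unfolding D_def using integral_norm_le_norm2[OF diff] fast[of n] by linarith
    then have "ennreal (integral\<^sup>L circle_measure (D n)) \<le> ennreal ((1/2)^n)"
      by (rule ennreal_leI)
    finally show ?thesis .
  qed
  then have "(\<integral>\<^sup>+z. (\<Sum>n. ennreal (D n z)) \<partial>circle_measure) \<le> (\<Sum>n. ennreal ((1/2)^n))"
    by (subst nn_integral_suminf) (auto intro!: suminf_le)
  also have "\<dots> = ennreal 2"
    by (subst suminf_ennreal2) (auto simp: suminf_geometric)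
  finally have "(\<integral>\<^sup>+z. (\<Sum>n. ennreal (D n z)) \<partial>circle_measure) \<noteq> \<infinity>"
    by (auto simp: top_unique)
  then have "AE z in circle_measure. (\<Sum>n. ennreal (D n z)) \<noteq> \<infinity>"
    by (intro nn_integral_PInf_AE) simp_all
  then show ?thesis
  proof eventually_elim
    case (elim z)
    then have "summable (\<lambda>n. D n z)"
      by (intro summable_suminf_not_top) (auto simp: D_def)
    then show ?case
      unfolding D_def by (rule convergent_if_summable_norm_diff)
  qed
qed

text \<open>Fatou's lemma for the $L^2$ norm.\<close>
lemma nn_integral_norm_sq_limit_le:
  assumes f: "\<And>n. f n \<in> L2T" and g: "g \<in> L2T" and [measurable]: "u \<in> borel_measurable borel"
    and lim: "AE z in circle_measure. (\<lambda>n. f n z) \<longlonglongrightarrow> u z"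
    and bound: "\<And>n. norm2 (\<lambda>z. f n z - g z) \<le> B"
  shows "(\<integral>\<^sup>+z. ennreal ((cmod (u z - g z))^2) \<partial>circle_measure) \<le> ennreal (B^2)"
proof -
  have [measurable]: "g \<in> borel_measurable borel" "f n \<in> borel_measurable borel" for n
    using f g by auto
  have "AE z in circle_measure.
      liminf (\<lambda>n. ennreal ((cmod (f n z - g z))^2)) = ennreal ((cmod (u z - g z))^2)"
    using lim
  proof eventually_elim
    case (elim z)
    then have "(\<lambda>n. ennreal ((cmod (f n z - g z))^2)) \<longlonglongrightarrow> ennreal ((cmod (u z - g z))^2)"
      by (intro tendsto_ennrealI tendsto_intros)
    then show ?case by (rule lim_imp_Liminf[rotated]) simp
  qed
  then have "(\<integral>\<^sup>+z. ennreal ((cmod (u z - g z))^2) \<partial>circle_measure)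
      = (\<integral>\<^sup>+z. liminf (\<lambda>n. ennreal ((cmod (f n z - g z))^2)) \<partial>circle_measure)"
    by (intro nn_integral_cong_AE) (auto elim!: eventually_mono)
  also have "\<dots> \<le> liminf (\<lambda>n. \<integral>\<^sup>+z. ennreal ((cmod (f n z - g z))^2) \<partial>circle_measure)"
    by (intro nn_integral_liminf) simp
  also have "\<dots> \<le> ennreal (B^2)"
  proof (intro Liminf_le always_eventually allI)
    fix n
    have "(\<integral>\<^sup>+z. ennreal ((cmod (f n z - g z))^2) \<partial>circle_measure) = ennreal ((norm2 (\<lambda>z. f n z - g z))^2)"
      unfolding power2_norm2 using f g by (intro nn_integral_eq_integral) (auto intro!: L2T_integrable_norm_sq)
    also have "\<dots> \<le> ennreal (B^2)"
      using bound[of n] by (intro ennreal_leI power_mono) simp_all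
    finally show "(\<integral>\<^sup>+z. ennreal ((cmod (f n z - g z))^2) \<partial>circle_measure) \<le> ennreal (B^2)" .
  qed simp
  finally show ?thesis .
qed

lemma norm2_limit_le:
  assumes f: "\<And>n. f n \<in> L2T" and g: "g \<in> L2T" and [measurable]: "u \<in> borel_measurable borel"
    and lim: "AE z in circle_measure. (\<lambda>n. f n z) \<longlonglongrightarrow> u z"
    and bound: "\<And>n. norm2 (\<lambda>z. f n z - g z) \<le> B"
  shows "(\<lambda>z. u z - g z) \<in> L2T" and "norm2 (\<lambda>z. u z - g z) \<le> B"
proof -
  have [measurable]: "g \<in> borel_measurable borel"
    using g by auto
  note nn_bound = nn_integral_norm_sq_limit_le[OF f g _ lim bound]
  have "integrable circle_measure (\<lambda>z. (cmod (u z - g z))^2)"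
    using nn_bound by (auto simp: integrable_iff_bounded le_less_trans)
  then show L2: "(\<lambda>z. u z - g z) \<in> L2T"
    by (simp add: L2T_def)
  have "ennreal ((norm2 (\<lambda>z. u z - g z))^2) = (\<integral>\<^sup>+z. ennreal ((cmod (u z - g z))^2) \<partial>circle_measure)"
    unfolding power2_norm2 using L2 by (intro nn_integral_eq_integral[symmetric]) (auto intro!: L2T_integrable_norm_sq)
  with nn_bound have "ennreal ((norm2 (\<lambda>z. u z - g z))^2) \<le> ennreal (B^2)"
    by simp
  then have "(norm2 (\<lambda>z. u z - g z))^2 \<le> B^2"
    by (subst (asm) ennreal_le_iff) auto
  moreover have "0 \<le> B"
    using order_trans[OF norm2_nonneg bound[of 0]] .
  ultimately show "norm2 (\<lambda>z. u z - g z) \<le> B"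
    by (rule power2_le_imp_le)
qed

lemma L2T_complete_geometric:
  assumes f: "\<And>n. f n \<in> L2T" and fast: "\<And>n. norm2 (\<lambda>z. f (Suc n) z - f n z) \<le> (1/2)^n"
  shows "\<exists>u\<in>L2T. \<forall>m. norm2 (\<lambda>z. u z - f m z) \<le> 2 * (1/2)^m"
proof -
  have [measurable]: "f n \<in> borel_measurable borel" for n
    using f[of n] by (rule L2T_measurable)
  define u where "u z = lim (\<lambda>n. f n z)" for z
  have [measurable]: "u \<in> borel_measurable borel"
    unfolding u_def by measurable
  have lim: "AE z in circle_measure. (\<lambda>n. f n z) \<longlonglongrightarrow> u z"
    using AE_convergent_if_norm2_geometric[OF f fast]
    by eventually_elim (simp add: u_def convergent_LIMSEQ_iff)
  have shifted_lim: "AE z in circle_measure. (\<lambda>N. f (N + m) z) \<longlonglongrightarrow> u z" for m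
    using lim by eventually_elim (rule LIMSEQ_ignore_initial_segment[where k=m, simplified])
  have bound: "norm2 (\<lambda>z. f (N + m) z - f m z) \<le> 2 * (1/2)^m" for N m
    using norm2_telescope[OF f fast, of N m] zero_le_power[of "1/2::real" "m+N"] by linarith
  have limit: "(\<lambda>z. u z - f m z) \<in> L2T \<and> norm2 (\<lambda>z. u z - f m z) \<le> 2 * (1/2)^m" for m
    using norm2_limit_le[of "\<lambda>N. f (N + m)" "f m" u, OF f f _ shifted_lim bound] by simp
  have "u \<in> L2T"
    using L2T_add[OF conjunct1[OF limit[of 0]] f[of 0]] by simp
  with limit show ?thesis by blast
qed

lemma L2T_complete:
  assumes f: "\<And>n. f n \<in> L2T"
    and Cauchy: "\<And>e. e > 0 \<Longrightarrow> \<exists>N. \<forall>m\<ge>N. \<forall>n\<ge>N. norm2 (\<lambda>z. f m z - f n z) < e"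
  shows "\<exists>u\<in>L2T. (\<lambda>n. norm2 (\<lambda>z. f n z - u z)) \<longlonglongrightarrow> 0"
proof -
  have "\<forall>k. \<exists>N. \<forall>m\<ge>N. \<forall>n\<ge>N. norm2 (\<lambda>z. f m z - f n z) < (1/2)^k"
    using Cauchy by simp
  then obtain N where N: "\<And>k m n. m \<ge> N k \<Longrightarrow> n \<ge> N k \<Longrightarrow> norm2 (\<lambda>z. f m z - f n z) < (1/2)^k"
    by metis
  define r where "r k = (\<Sum>j\<le>k. N j)" for k
  have rN: "N k \<le> r k" for k
    unfolding r_def by (rule member_le_sum) auto
  have r_mono: "r k \<le> r (Suc k)" for k
    unfolding r_def by simp
  have fast: "norm2 (\<lambda>z. f (r (Suc k)) z - f (r k) z) \<le> (1/2)^k" for k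
    using N[of k "r (Suc k)" "r k"] rN[of k] r_mono[of k] by simp
  obtain u where u: "u \<in> L2T" and u_approx: "\<And>m. norm2 (\<lambda>z. u z - f (r m) z) \<le> 2 * (1/2)^m"
    using L2T_complete_geometric[of "\<lambda>k. f (r k)", OF f fast] by blast
  have "(\<lambda>n. norm2 (\<lambda>z. f n z - u z)) \<longlonglongrightarrow> 0"
  proof (rule LIMSEQ_I)
    fix e :: real assume e: "0 < e"
    obtain k where k: "(1/2::real)^k < e/3"
      using real_arch_pow_inv[of "e/3" "1/2"] e by auto
    have "norm2 (\<lambda>z. f n z - u z) < e" if n: "N k \<le> n" for n
    proof -
      have "norm2 (\<lambda>z. f n z - u z) \<le> norm2 (\<lambda>z. f n z - f (r k) z) + norm2 (\<lambda>z. f (r k) z - u z)"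
        by (rule norm2_triangle_diff[OF f f u])
      also have "norm2 (\<lambda>z. f n z - f (r k) z) < (1/2)^k"
        using N[of k n "r k"] n rN[of k] by simp
      also have "norm2 (\<lambda>z. f (r k) z - u z) \<le> 2 * (1/2)^k"
        using u_approx[of k] norm2_minus_commute[of "f (r k)" u] by simp
      finally show ?thesis using k by simp
    qed
    then show "\<exists>N. \<forall>n\<ge>N. norm (norm2 (\<lambda>z. f n z - u z) - 0) < e"
      by auto
  qed
  with u show ?thesis by blast
qed

section \<open>Fourier partial sums and the projection onto $H^2$\<close>

lemma fourier_coeff_nat_eq_inner2:
  "f \<in> borel_measurable borel \<Longrightarrow> fourier_coeff f (int k) = inner2 f (\<lambda>z. z ^ k)"
  using fourier_coeff_eq_inner2[of f "int k"] by simp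

lemma inner2_power: "inner2 (\<lambda>z. z ^ j) (\<lambda>z. z ^ k) = (if j = k then 1 else 0)"
  using inner2_powi[of "int j" "int k"] by simp

lemma inner2_power_powi_neg: "n < 0 \<Longrightarrow> inner2 (\<lambda>z. z ^ j) (\<lambda>z. z powi n) = 0"
  using inner2_powi[of "int j" n] by simp

lemma L2T_power_sum [simp, intro]: "(\<lambda>z. \<Sum>k\<in>S. a k * z ^ k) \<in> L2T"
  by (intro L2T_sum L2T_cmult L2T_power)

lemma inner2_power_sum_power:
  assumes "finite S"
  shows "inner2 (\<lambda>z. \<Sum>k\<in>S. a k * z ^ k) (\<lambda>z. z ^ j) = (if j \<in> S then a j else 0)"
proof -
  have "inner2 (\<lambda>z. \<Sum>k\<in>S. a k * z ^ k) (\<lambda>z. z ^ j) = (\<Sum>k\<in>S. a k * (if k = j then 1 else 0))"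
    by (subst inner2_sum_left) (auto simp: inner2_cmult_left inner2_power)
  also have "\<dots> = (if j \<in> S then a j else 0)"
    using assms by (simp add: if_distrib cong: if_cong)
  finally show ?thesis .
qed

lemma inner2_power_sum_powi_neg:
  "n < 0 \<Longrightarrow> inner2 (\<lambda>z. \<Sum>k\<in>S. a k * z ^ k) (\<lambda>z. z powi n) = 0"
  by (subst inner2_sum_left) (auto simp: inner2_cmult_left inner2_power_powi_neg)

lemma inner2_right_power_sum:
  "F \<in> L2T \<Longrightarrow> inner2 F (\<lambda>z. \<Sum>k\<in>S. a k * z ^ k) = (\<Sum>k\<in>S. cnj (a k) * inner2 F (\<lambda>z. z ^ k))"
  by (subst inner2_sum_right) (auto simp: inner2_cmult_right)

lemma sum_cnj_mult_self: "(\<Sum>k\<in>S. cnj (a k) * a k) = of_real (\<Sum>k\<in>S. (cmod (a k))^2)"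
proof -
  have "(\<Sum>k\<in>S. cnj (a k) * a k) = (\<Sum>k\<in>S. of_real ((cmod (a k))^2))"
    by (intro sum.cong refl) (simp add: complex_norm_square mult.commute del: of_real_power)
  then show ?thesis by simp
qed

lemma power2_norm2_power_sum:
  assumes "finite S"
  shows "(norm2 (\<lambda>z. \<Sum>k\<in>S. a k * z ^ k))^2 = (\<Sum>k\<in>S. (cmod (a k))^2)"
proof -
  have "inner2 (\<lambda>z. \<Sum>k\<in>S. a k * z ^ k) (\<lambda>z. \<Sum>k\<in>S. a k * z ^ k) = (\<Sum>k\<in>S. cnj (a k) * a k)"
    using assms by (simp add: inner2_right_power_sum inner2_power_sum_power)
  also have "\<dots> = of_real (\<Sum>k\<in>S. (cmod (a k))^2)"
    by (rule sum_cnj_mult_self)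
  finally show ?thesis
    by (simp only: inner2_self of_real_eq_iff)
qed

definition fourier_partial_sum :: "(complex \<Rightarrow> complex) \<Rightarrow> nat \<Rightarrow> complex \<Rightarrow> complex" where
  "fourier_partial_sum F N = (\<lambda>z. \<Sum>k<N. fourier_coeff F (int k) * z ^ k)"

lemma L2T_fourier_partial_sum [simp, intro]: "fourier_partial_sum F N \<in> L2T"
  unfolding fourier_partial_sum_def by (rule L2T_power_sum)

lemma Bessel_inequality:
  assumes F: "F \<in> L2T"
  shows "(\<Sum>k<N. (cmod (fourier_coeff F (int k)))^2) \<le> (norm2 F)^2"
proof -
  let ?S = "fourier_partial_sum F N" and ?s = "\<Sum>k<N. (cmod (fourier_coeff F (int k)))^2"
  have coeff: "fourier_coeff F (int k) = inner2 F (\<lambda>z. z ^ k)" for k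
    using F by (intro fourier_coeff_nat_eq_inner2) auto
  have F_S: "inner2 F ?S = of_real ?s"
    unfolding fourier_partial_sum_def inner2_right_power_sum[OF F] coeff[symmetric]
    by (rule sum_cnj_mult_self)
  have norm_S: "(norm2 ?S)^2 = ?s"
    unfolding fourier_partial_sum_def by (rule power2_norm2_power_sum) simp
  have S_F: "inner2 ?S F = of_real ?s"
    by (subst inner2_commute) (simp add: F_S)
  have "0 \<le> (norm2 (\<lambda>z. F z - ?S z))^2"
    by simp
  also have "\<dots> = Re (inner2 F F - inner2 F ?S - (inner2 ?S F - inner2 ?S ?S))"
    unfolding power2_norm2_eq_Re_inner2 using F by (simp add: inner2_diff_left inner2_diff_right L2T_diff)
  also have "\<dots> = (norm2 F)^2 - ?s"
    by (simp add: F_S S_F norm_S inner2_self)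
  finally show ?thesis by simp
qed

lemma fourier_partial_sum_Cauchy:
  assumes F: "F \<in> L2T" and e: "e > 0"
  shows "\<exists>N0. \<forall>m\<ge>N0. \<forall>n\<ge>N0. norm2 (\<lambda>z. fourier_partial_sum F m z - fourier_partial_sum F n z) < e"
proof -
  define a where "a k = (cmod (fourier_coeff F (int k)))^2" for k
  have "summable a"
    by (rule summableI_nonneg_bounded[where x="(norm2 F)^2"]) (auto simp: a_def Bessel_inequality[OF F])
  then obtain N0 where N0: "\<And>m n. m \<ge> N0 \<Longrightarrow> norm (sum a {m..<n}) < e^2"
    unfolding summable_Cauchy using e by (meson zero_less_power)
  have close: "norm2 (\<lambda>z. fourier_partial_sum F m z - fourier_partial_sum F n z) < e"
    if "N0 \<le> n" "n \<le> m" for m n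
  proof -
    have "{..<m} = {..<n} \<union> {n..<m}"
      using that(2) by auto
    then have "(\<lambda>z. fourier_partial_sum F m z - fourier_partial_sum F n z)
        = (\<lambda>z. \<Sum>k\<in>{n..<m}. fourier_coeff F (int k) * z ^ k)"
      by (simp add: fourier_partial_sum_def sum.union_disjoint ivl_disj_int)
    then have "(norm2 (\<lambda>z. fourier_partial_sum F m z - fourier_partial_sum F n z))^2 = sum a {n..<m}"
      by (simp add: power2_norm2_power_sum a_def)
    also have "\<dots> < e^2"
      using N0[OF that(1), of m] by (simp add: a_def)
    finally show ?thesis
      using e by (meson power_less_imp_less_base less_le)
  qed
  show ?thesis
  proof (intro exI allI impI)
    fix m n assume "N0 \<le> m" "N0 \<le> n"
    then show "norm2 (\<lambda>z. fourier_partial_sum F m z - fourier_partial_sum F n z) < e"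
      using close[of n m] close[of m n] norm2_minus_commute[of "fourier_partial_sum F m"]
      by (cases "n \<le> m") auto
  qed
qed

lemma fourier_partial_sum_converges:
  assumes F: "F \<in> L2T"
  obtains u where "u \<in> H2" "(\<lambda>N. norm2 (\<lambda>z. fourier_partial_sum F N z - u z)) \<longlonglongrightarrow> 0"
    "\<And>k::nat. fourier_coeff u (int k) = fourier_coeff F (int k)"
proof -
  obtain u where u: "u \<in> L2T" and lim: "(\<lambda>N. norm2 (\<lambda>z. fourier_partial_sum F N z - u z)) \<longlonglongrightarrow> 0"
    using L2T_complete[of "fourier_partial_sum F", OF _ fourier_partial_sum_Cauchy[OF F]] by blast
  have [measurable]: "u \<in> borel_measurable borel"
    using u by (rule L2T_measurable)
  note limit = tendsto_inner2_left[OF L2T_fourier_partial_sum u _ lim]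
  have "fourier_coeff u n = 0" if n: "n < 0" for n
  proof -
    have "inner2 (fourier_partial_sum F N) (\<lambda>z. z powi n) = 0" for N
      unfolding fourier_partial_sum_def by (rule inner2_power_sum_powi_neg[OF n])
    then have "(\<lambda>N. 0) \<longlonglongrightarrow> inner2 u (\<lambda>z. z powi n)"
      using limit[OF L2T_powi[of n]] by simp
    then have "inner2 u (\<lambda>z. z powi n) = 0"
      using LIMSEQ_unique[OF tendsto_const] by metis
    then show ?thesis
      by (simp add: fourier_coeff_eq_inner2)
  qed
  with u have H2: "u \<in> H2"
    by (simp add: H2_def)
  have coeff: "fourier_coeff u (int k) = fourier_coeff F (int k)" for k
  proof -
    have "inner2 (fourier_partial_sum F N) (\<lambda>z. z ^ k) = fourier_coeff F (int k)" if "Suc k \<le> N" for N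
      using that unfolding fourier_partial_sum_def by (simp add: inner2_power_sum_power)
    then have "eventually (\<lambda>N. inner2 (fourier_partial_sum F N) (\<lambda>z. z ^ k) = fourier_coeff F (int k)) sequentially"
      unfolding eventually_sequentially by blast
    then have "(\<lambda>N. inner2 (fourier_partial_sum F N) (\<lambda>z. z ^ k)) \<longlonglongrightarrow> fourier_coeff F (int k)"
      by (rule tendsto_eventually)
    with limit[OF L2T_power[of k]] have "inner2 u (\<lambda>z. z ^ k) = fourier_coeff F (int k)"
      by (rule LIMSEQ_unique)
    then show ?thesis
      by (simp add: fourier_coeff_nat_eq_inner2)
  qed
  from H2 lim coeff show ?thesis
    by (rule that)
qed

lemma fourier_coeff_diff:
  "f \<in> L2T \<Longrightarrow> g \<in> L2T \<Longrightarrow> fourier_coeff (\<lambda>z. f z - g z) n = fourier_coeff f n - fourier_coeff g n"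
  unfolding fourier_coeff_def by (simp add: left_diff_distrib integrable_L2T_mult)

lemma H2_imp_L2T: "u \<in> H2 \<Longrightarrow> u \<in> L2T"
  by (simp add: H2_def)

lemma fourier_partial_sum_converges_H2:
  assumes h: "h \<in> H2"
  shows "(\<lambda>N. norm2 (\<lambda>z. fourier_partial_sum h N z - h z)) \<longlonglongrightarrow> 0"
proof -
  have hL: "h \<in> L2T" using h by (rule H2_imp_L2T)
  obtain u where u: "u \<in> H2" and lim: "(\<lambda>N. norm2 (\<lambda>z. fourier_partial_sum h N z - u z)) \<longlonglongrightarrow> 0"
    and coeff: "\<And>k::nat. fourier_coeff u (int k) = fourier_coeff h (int k)"
    using fourier_partial_sum_converges[OF hL] by blast
  have uL: "u \<in> L2T" using u by (rule H2_imp_L2T)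
  have "fourier_coeff (\<lambda>z. h z - u z) n = 0" for n
  proof (cases "n < 0")
    case True
    then show ?thesis using h u by (simp add: fourier_coeff_diff hL uL H2_def)
  next
    case False
    then obtain k where "n = int k" by (metis nonneg_int_cases not_less)
    then show ?thesis using coeff[of k] by (simp add: fourier_coeff_diff hL uL)
  qed
  then have "AE z in circle_measure. h z - u z = 0"
    using hL uL by (intro fourier_coeff_unique integrable_L2T) auto
  then have "AE z in circle_measure. fourier_partial_sum h N z - h z = fourier_partial_sum h N z - u z" for N
    by eventually_elim simp
  then have "norm2 (\<lambda>z. fourier_partial_sum h N z - h z) = norm2 (\<lambda>z. fourier_partial_sum h N z - u z)" for N
    using hL uL by (intro norm2_cong_AE) auto
  then show ?thesis using lim by simp
qed

lemma inner2_H2_eq_0: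
  assumes D: "D \<in> L2T" and coeff: "\<And>k::nat. fourier_coeff D (int k) = 0" and h: "h \<in> H2"
  shows "inner2 D h = 0"
proof -
  have "inner2 D (fourier_partial_sum h N) = 0" for N
  proof -
    have "inner2 D (\<lambda>z. z ^ k) = 0" for k
      using coeff[of k] fourier_coeff_nat_eq_inner2[of D k] D by auto
    then show ?thesis
      unfolding fourier_partial_sum_def by (simp add: inner2_right_power_sum[OF D])
  qed
  moreover have "(\<lambda>N. inner2 D (fourier_partial_sum h N)) \<longlonglongrightarrow> inner2 D h"
    by (rule tendsto_inner2_right[OF L2T_fourier_partial_sum H2_imp_L2T[OF h] D
          fourier_partial_sum_converges_H2[OF h]])
  ultimately have "(\<lambda>N. 0) \<longlonglongrightarrow> inner2 D h"
    by simp
  then show ?thesis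
    using LIMSEQ_unique[OF tendsto_const] by metis
qed

lemma Pplus_H2:
  assumes F: "F \<in> L2T"
  shows "Pplus F \<in> H2" and "\<And>h. h \<in> H2 \<Longrightarrow> inner2 (\<lambda>z. F z - Pplus F z) h = 0"
proof -
  obtain u where u: "u \<in> H2" and coeff: "\<And>k::nat. fourier_coeff u (int k) = fourier_coeff F (int k)"
    using fourier_partial_sum_converges[OF F] by blast
  have "inner2 (\<lambda>z. F z - u z) h = 0" if "h \<in> H2" for h
    using F H2_imp_L2T[OF u] coeff that
    by (intro inner2_H2_eq_0) (auto simp: fourier_coeff_diff)
  with u have "\<exists>u. u \<in> H2 \<and> (\<forall>h\<in>H2. inner2 (\<lambda>z. F z - u z) h = 0)"
    by blast
  then have "Pplus F \<in> H2 \<and> (\<forall>h\<in>H2. inner2 (\<lambda>z. F z - Pplus F z) h = 0)"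
    unfolding Pplus_def by (rule someI_ex)
  then show "Pplus F \<in> H2" "\<And>h. h \<in> H2 \<Longrightarrow> inner2 (\<lambda>z. F z - Pplus F z) h = 0"
    by auto
qed

section \<open>Products in $H^2$\<close>

lemma fourier_coeff_cnj:
  assumes [measurable]: "f \<in> borel_measurable borel"
  shows "fourier_coeff (\<lambda>z. cnj (f z)) n = cnj (fourier_coeff f (- n))"
proof -
  have "AE z in circle_measure. cnj (f z) * z powi (- n) = cnj (f z * z powi (- (- n)))"
    using AE_circle_measure_norm by eventually_elim (simp add: cnj_powi_if_norm_1)
  then have "fourier_coeff (\<lambda>z. cnj (f z)) n = integral\<^sup>L circle_measure (\<lambda>z. cnj (f z * z powi (- (- n))))"
    unfolding fourier_coeff_def by (intro integral_cong_AE) (auto simp del: power_int_minus)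
  also have "\<dots> = cnj (fourier_coeff f (- n))"
    unfolding fourier_coeff_def by (rule Bochner_Integration.integral_cnj)
  finally show ?thesis .
qed

lemma fourier_coeff_power_mult:
  assumes [measurable]: "f \<in> borel_measurable borel"
  shows "fourier_coeff (\<lambda>z. z ^ m * f z) n = fourier_coeff f (n - int m)"
proof -
  have "AE z in circle_measure. z ^ m * f z * z powi (- n) = f z * z powi (- (n - int m))"
    using AE_circle_measure_norm
  proof eventually_elim
    case (elim z)
    then have "z \<noteq> 0" by auto
    then have "z powi (int m + - n) = z ^ m * z powi (- n)"
      using power_int_add[of z "int m" "- n"] by (simp del: power_int_minus)
    then show ?case
      by (simp add: mult_ac del: power_int_minus)
  qed
  then show ?thesis
    unfolding fourier_coeff_def by (intro integral_cong_AE) (auto simp del: power_int_minus)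
qed

lemma cnj_shift_H2:
  assumes G: "G \<in> L2T" and coeff: "\<And>j::nat. fourier_coeff G (int j) = 0"
  shows "(\<lambda>z. cnj (z * G z)) \<in> H2"
proof -
  have [measurable]: "G \<in> borel_measurable borel"
    using G by (rule L2T_measurable)
  have "fourier_coeff (\<lambda>z. cnj (z * G z)) n = 0" if "n < 0" for n
  proof -
    have "fourier_coeff (\<lambda>z. cnj (z * G z)) n = cnj (fourier_coeff (\<lambda>z. z * G z) (- n))"
      by (rule fourier_coeff_cnj) measurable
    also have "\<dots> = cnj (fourier_coeff G (- n - 1))"
      using fourier_coeff_power_mult[of G 1 "- n"] by simp
    also have "- n - 1 = int (nat (- n - 1))"
      using that by simp
    finally show ?thesis
      by (simp only: coeff complex_cnj_zero)
  qed
  moreover have "(\<lambda>z. cnj (z * G z)) \<in> L2T"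
    by (simp only: L2T_cnj_iff) (use L2T_power_mult[OF G, of 1] in simp)
  ultimately show ?thesis
    unfolding H2_def by blast
qed

lemma integral_power_mult_H2_eq_0:
  assumes u: "u \<in> H2" and v: "v \<in> H2" and m: "m \<ge> 1"
  shows "integral\<^sup>L circle_measure (\<lambda>z. z ^ m * u z * v z) = 0"
proof -
  have uL: "u \<in> L2T" using u by (rule H2_imp_L2T)
  have [measurable]: "u \<in> borel_measurable borel" using uL by (rule L2T_measurable)
  define D where "D z = cnj (z ^ m * u z)" for z
  have D: "D \<in> L2T"
    unfolding D_def by (simp only: L2T_cnj_iff) (rule L2T_power_mult[OF uL])
  have "fourier_coeff D (int k) = 0" for k
  proof -
    have "fourier_coeff D (int k) = cnj (fourier_coeff (\<lambda>z. z ^ m * u z) (- int k))"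
      unfolding D_def by (rule fourier_coeff_cnj) measurable
    also have "\<dots> = cnj (fourier_coeff u (- int k - int m))"
      by (simp add: fourier_coeff_power_mult)
    also have "\<dots> = 0"
      using u m by (simp add: H2_def)
    finally show ?thesis .
  qed
  then have "inner2 D v = 0"
    by (intro inner2_H2_eq_0[OF D _ v])
  moreover have "(\<lambda>z. D z * cnj (v z)) = (\<lambda>z. cnj (z ^ m * u z * v z))"
    by (simp add: D_def fun_eq_iff)
  then have "inner2 D v = cnj (integral\<^sup>L circle_measure (\<lambda>z. z ^ m * u z * v z))"
    unfolding inner2_def by (simp only: Bochner_Integration.integral_cnj)
  ultimately show ?thesis
    by simp
qed

lemma H2_power [simp, intro]: "(\<lambda>z. z ^ j) \<in> H2"
  unfolding H2_def using inner2_power_powi_neg[of _ j] by (simp add: fourier_coeff_eq_inner2)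

lemma H2_mult_LinfT:
  assumes "\<Theta> \<in> H2" "\<Theta> \<in> LinfT" and h: "h \<in> H2"
  shows "(\<lambda>z. \<Theta> z * h z) \<in> H2"
proof -
  have "fourier_coeff (\<lambda>z. \<Theta> z * h z) n = 0" if n: "n < 0" for n
  proof -
    have "fourier_coeff (\<lambda>z. \<Theta> z * h z) n = integral\<^sup>L circle_measure (\<lambda>z. z ^ nat (- n) * \<Theta> z * h z)"
      unfolding fourier_coeff_def
      by (intro Bochner_Integration.integral_cong refl) (use n in \<open>simp add: power_int_def mult_ac\<close>)
    also have "\<dots> = 0"
      using n by (intro integral_power_mult_H2_eq_0[OF assms(1) h]) simp
    finally show ?thesis .
  qed
  with LinfT_mult_L2T[OF assms(2) H2_imp_L2T[OF h]] show ?thesis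
    by (simp add: H2_def)
qed

lemma poly_LinfT: "(\<lambda>z. poly q z) \<in> LinfT"
proof -
  have "AE z in circle_measure. cmod (poly q z) \<le> (\<Sum>i\<le>degree q. cmod (coeff q i))"
    using AE_circle_measure_norm
  proof eventually_elim
    case (elim z)
    have "cmod (poly q z) \<le> (\<Sum>i\<le>degree q. cmod (coeff q i * z ^ i))"
      unfolding poly_altdef by (rule norm_sum)
    also have "\<dots> = (\<Sum>i\<le>degree q. cmod (coeff q i))"
      using elim by (simp add: norm_mult norm_power)
    finally show ?case .
  qed
  then show ?thesis
    unfolding LinfT_def by auto
qed

lemma poly_H2: "(\<lambda>z. poly q z) \<in> H2"
proof -
  have "poly q = (\<lambda>z. \<Sum>i\<le>degree q. coeff q i * z ^ i)"
    by (simp add: fun_eq_iff poly_altdef)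
  then show ?thesis
    unfolding H2_def
    by (auto simp: fourier_coeff_eq_inner2 inner2_power_sum_powi_neg simp del: L2T_power_sum)
qed

lemma H2_poly_mult: "h \<in> H2 \<Longrightarrow> (\<lambda>z. poly q z * h z) \<in> H2"
  using H2_mult_LinfT[OF poly_H2 poly_LinfT] .

section \<open>Outer functions\<close>

lemma outer_fun_H2: "outer_fun p \<Longrightarrow> p \<in> H2"
  by (simp add: outer_fun_def)

lemma outer_fun_AE_nonzero:
  assumes "outer_fun p"
  shows "AE z in circle_measure. p z \<noteq> 0"
proof (rule ccontr)
  assume not_AE: "\<not> (AE z in circle_measure. p z \<noteq> 0)"
  have pL: "p \<in> L2T" using assms by (simp add: outer_fun_def H2_imp_L2T)
  have [measurable]: "p \<in> borel_measurable borel" using pL by (rule L2T_measurable)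
  define A where "A = {z. p z = 0}"
  have [measurable]: "A \<in> sets borel" unfolding A_def by measurable
  have "emeasure circle_measure A \<noteq> 0"
    using not_AE by (subst (asm) AE_iff_measurable[where N=A]) (auto simp: A_def)
  then have A_pos: "measure circle_measure A > 0"
    using circle.emeasure_eq_measure[of A] by (simp add: zero_less_measure_iff)
  \<comment> \<open>no multiple $q p$ vanishing on $A$ can approximate the constant $1$\<close>
  have approx: "\<exists>q. norm2 (\<lambda>z. poly q z * p z - h z) < \<epsilon>" if "h \<in> H2" "\<epsilon> > 0" for h \<epsilon>
    using assms that unfolding outer_fun_def by blast
  have "(\<lambda>z. 1) \<in> H2"
    using H2_power[of 0] by simp
  then obtain q where q: "norm2 (\<lambda>z. poly q z * p z - 1) < sqrt (measure circle_measure A)"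
    using approx[of "\<lambda>z. 1" "sqrt (measure circle_measure A)"] A_pos by auto
  have qp: "(\<lambda>z. poly q z * p z - 1) \<in> L2T"
    by (rule L2T_diff[OF LinfT_mult_L2T[OF poly_LinfT pL] L2T_const])
  have "measure circle_measure A = integral\<^sup>L circle_measure (indicator A :: complex \<Rightarrow> real)"
    by simp
  also have "\<dots> \<le> integral\<^sup>L circle_measure (\<lambda>z. (cmod (poly q z * p z - 1))^2)"
  proof (rule integral_mono)
    show "integrable circle_measure (indicator A :: complex \<Rightarrow> real)"
      by (rule integrable_real_indicator) (simp_all add: circle.emeasure_finite[THEN less_top[THEN iffD1]])
  qed (auto simp: L2T_integrable_norm_sq[OF qp] A_def indicator_def)
  also have "\<dots> = (norm2 (\<lambda>z. poly q z * p z - 1))^2"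
    by (rule power2_norm2[symmetric])
  also have "\<dots> < (sqrt (measure circle_measure A))^2"
    by (rule power_strict_mono[OF q]) simp_all
  finally show False
    by simp
qed

lemma outer_fun_integral_mult_H2_eq_0:
  assumes p: "outer_fun p" and W: "W \<in> L2T"
    and orth: "\<And>q. integral\<^sup>L circle_measure (\<lambda>z. W z * (poly q z * p z)) = 0"
    and h: "h \<in> H2"
  shows "integral\<^sup>L circle_measure (\<lambda>z. W z * h z) = 0"
proof (rule zero_if_norm_le_epsilon_mult)
  fix e :: real assume "e > 0"
  then obtain q where q: "norm2 (\<lambda>z. poly q z * p z - h z) < e"
    using p h unfolding outer_fun_def by blast
  have pL: "p \<in> L2T" using p by (simp add: outer_fun_def H2_imp_L2T)
  have qp: "(\<lambda>z. poly q z * p z) \<in> L2T"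
    by (rule LinfT_mult_L2T[OF poly_LinfT pL])
  have W': "(\<lambda>z. cnj (W z)) \<in> L2T" using W by simp
  have integral_eq: "integral\<^sup>L circle_measure (\<lambda>z. W z * u z) = inner2 u (\<lambda>z. cnj (W z))" for u
    unfolding inner2_def by (simp add: mult.commute)
  have "norm (integral\<^sup>L circle_measure (\<lambda>z. W z * h z))
      = cmod (inner2 h (\<lambda>z. cnj (W z)) - inner2 (\<lambda>z. poly q z * p z) (\<lambda>z. cnj (W z)))"
    using orth[of q] by (simp add: integral_eq)
  also have "\<dots> \<le> norm2 (\<lambda>z. h z - poly q z * p z) * norm2 (\<lambda>z. cnj (W z))"
    by (rule norm_inner2_diff_le[OF H2_imp_L2T[OF h] qp W'])
  also have "\<dots> = norm2 (\<lambda>z. poly q z * p z - h z) * norm2 W"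
    by (simp add: norm2_minus_commute[of h] norm2_def)
  also have "\<dots> \<le> e * norm2 W"
    using q by (intro mult_right_mono) simp_all
  finally show "norm (integral\<^sup>L circle_measure (\<lambda>z. W z * h z)) \<le> e * norm2 W" .
qed

section \<open>Generalized Toeplitz kernels with target space $\Theta H^2$\<close>

lemma inner_fun_LinfT: "inner_fun \<Theta> \<Longrightarrow> \<Theta> \<in> LinfT"
  unfolding inner_fun_def LinfT_def
  by (auto simp: H2_def L2T_def intro!: exI[of _ 1] elim!: eventually_mono)

lemma inner_fun_H2_mult: "inner_fun \<Theta> \<Longrightarrow> h \<in> H2 \<Longrightarrow> (\<lambda>z. \<Theta> z * h z) \<in> H2"
  using H2_mult_LinfT[of \<Theta> h] inner_fun_LinfT[of \<Theta>] by (simp add: inner_fun_def)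

lemma toeplitz_orth_inner_mult_H2_iff:
  assumes \<Theta>: "inner_fun \<Theta>" and F: "(\<lambda>z. g z * f z) \<in> L2T"
  shows "toeplitz g f \<in> orth (inner_mult_H2 \<Theta>) \<longleftrightarrow>
         (\<forall>h\<in>H2. inner2 (\<lambda>z. g z * f z) (\<lambda>z. \<Theta> z * h z) = 0)"
proof -
  define u where "u = toeplitz g f"
  have u: "u \<in> H2" and u_orth: "\<And>e. e \<in> H2 \<Longrightarrow> inner2 (\<lambda>z. g z * f z - u z) e = 0"
    using Pplus_H2[OF F] unfolding u_def toeplitz_def by auto
  have uL: "u \<in> L2T" using u by (rule H2_imp_L2T)
  have \<Theta>h: "(\<lambda>z. \<Theta> z * h z) \<in> H2" if "h \<in> H2" for h
    using \<Theta> that by (rule inner_fun_H2_mult)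
  have same: "inner2 (\<lambda>z. g z * f z) (\<lambda>z. \<Theta> z * h z) = inner2 u (\<lambda>z. \<Theta> z * h z)" if h: "h \<in> H2" for h
    using u_orth[OF \<Theta>h[OF h]] inner2_diff_left[OF F uL H2_imp_L2T[OF \<Theta>h[OF h]]] by simp
  have "u \<in> orth (inner_mult_H2 \<Theta>) \<longleftrightarrow> (\<forall>h\<in>H2. inner2 u (\<lambda>z. \<Theta> z * h z) = 0)"
  proof
    assume "u \<in> orth (inner_mult_H2 \<Theta>)"
    moreover have "(\<lambda>z. \<Theta> z * h z) \<in> inner_mult_H2 \<Theta>" if "h \<in> H2" for h
      using H2_imp_L2T[OF \<Theta>h[OF that]] that unfolding inner_mult_H2_def by auto
    ultimately show "\<forall>h\<in>H2. inner2 u (\<lambda>z. \<Theta> z * h z) = 0"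
      unfolding orth_def by blast
  next
    assume orth_u: "\<forall>h\<in>H2. inner2 u (\<lambda>z. \<Theta> z * h z) = 0"
    have "inner2 u e = 0" if "e \<in> inner_mult_H2 \<Theta>" for e
    proof -
      have e: "e \<in> L2T" and "\<exists>h\<in>H2. AE z in circle_measure. e z = \<Theta> z * h z"
        using that by (simp_all add: inner_mult_H2_def)
      then obtain h where h: "h \<in> H2" and ae: "AE z in circle_measure. e z = \<Theta> z * h z"
        by blast
      have "inner2 u e = inner2 u (\<lambda>z. \<Theta> z * h z)"
        by (rule inner2_cong_AE[OF uL uL e H2_imp_L2T[OF \<Theta>h[OF h]]]) (simp_all add: ae)
      with orth_u h show ?thesis by simp
    qed
    with uL show "u \<in> orth (inner_mult_H2 \<Theta>)"
      by (simp add: orth_def)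
  qed
  then show ?thesis
    using same unfolding u_def by simp
qed

lemma gen_toeplitz_kernel_inner_mult_H2_iff:
  assumes "inner_fun \<Theta>" and "E1 \<subseteq> H2" and "g \<in> LinfT"
  shows "f \<in> gen_toeplitz_kernel g E1 (inner_mult_H2 \<Theta>) \<longleftrightarrow>
         f \<in> E1 \<and> (\<forall>h\<in>H2. inner2 (\<lambda>z. g z * f z) (\<lambda>z. \<Theta> z * h z) = 0)"
proof (cases "f \<in> E1")
  case True
  then have "(\<lambda>z. g z * f z) \<in> L2T"
    using assms(2,3) by (intro LinfT_mult_L2T H2_imp_L2T) auto
  with True show ?thesis
    using toeplitz_orth_inner_mult_H2_iff[OF assms(1)] unfolding gen_toeplitz_kernel_def by auto
qed (simp add: gen_toeplitz_kernel_def)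

text \<open>The kernel condition says that $g f \overline{\Theta}$ is orthogonal to $H^2$, i.e. that it
  lies in $\overline{z H^2}$.\<close>
lemma gen_toeplitz_kernel_cnj_H2:
  assumes \<Theta>: "inner_fun \<Theta>" and E1: "E1 \<subseteq> H2" and g: "g \<in> LinfT"
    and f: "f \<in> gen_toeplitz_kernel g E1 (inner_mult_H2 \<Theta>)"
  shows "(\<lambda>z. cnj (z * (g z * f z * cnj (\<Theta> z)))) \<in> H2"
proof (rule cnj_shift_H2)
  have fE: "f \<in> E1" and orth: "\<forall>h\<in>H2. inner2 (\<lambda>z. g z * f z) (\<lambda>z. \<Theta> z * h z) = 0"
    using f gen_toeplitz_kernel_inner_mult_H2_iff[OF \<Theta> E1 g] by auto
  have gf: "(\<lambda>z. g z * f z) \<in> L2T"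
    using fE E1 by (intro LinfT_mult_L2T[OF g] H2_imp_L2T) auto
  have "(\<lambda>z. cnj (\<Theta> z)) \<in> LinfT"
    using inner_fun_LinfT[OF \<Theta>] by (auto simp: LinfT_def)
  from LinfT_mult_L2T[OF this gf] show G: "(\<lambda>z. g z * f z * cnj (\<Theta> z)) \<in> L2T"
    by (simp add: mult.commute)
  show "fourier_coeff (\<lambda>z. g z * f z * cnj (\<Theta> z)) (int j) = 0" for j
  proof -
    have "fourier_coeff (\<lambda>z. g z * f z * cnj (\<Theta> z)) (int j) = inner2 (\<lambda>z. g z * f z) (\<lambda>z. \<Theta> z * z ^ j)"
      unfolding fourier_coeff_nat_eq_inner2[OF L2T_measurable[OF G]] inner2_def by (simp add: mult_ac)
    then show ?thesis
      using orth H2_power[of j] by simp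
  qed
qed

section \<open>The minimal kernel\<close>

definition min_kernel_symbol ::
  "(complex \<Rightarrow> complex) \<Rightarrow> (complex \<Rightarrow> complex) \<Rightarrow> (complex \<Rightarrow> complex) \<Rightarrow> complex \<Rightarrow> complex" where
  "min_kernel_symbol \<Theta> \<theta> p z = \<Theta> z * cnj (\<theta> z * z * p z) / p z"

lemma min_kernel_symbol_LinfT:
  assumes "inner_fun \<Theta>" "inner_fun \<theta>" "p \<in> borel_measurable borel"
  shows "min_kernel_symbol \<Theta> \<theta> p \<in> LinfT"
proof -
  have [measurable]: "\<Theta> \<in> borel_measurable borel" "\<theta> \<in> borel_measurable borel" "p \<in> borel_measurable borel"
    using assms by (auto simp: inner_fun_def H2_def L2T_def)
  have "AE z in circle_measure. cmod (\<Theta> z) = 1 \<and> cmod (\<theta> z) = 1 \<and> cmod z = 1"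
    using assms(1,2) AE_circle_measure_norm by (auto simp: inner_fun_def)
  then have "AE z in circle_measure. cmod (min_kernel_symbol \<Theta> \<theta> p z) \<le> 1"
    by eventually_elim (cases "p z = 0"; simp add: min_kernel_symbol_def norm_mult norm_divide)
  moreover have "min_kernel_symbol \<Theta> \<theta> p \<in> borel_measurable borel"
    unfolding min_kernel_symbol_def[abs_def] by measurable
  ultimately show ?thesis
    unfolding LinfT_def by auto
qed

lemma mem_gen_toeplitz_kernel_min_kernel_symbol:
  assumes \<Theta>: "inner_fun \<Theta>" and E1: "E1 \<subseteq> H2" and k: "k \<in> E1"
    and \<theta>: "inner_fun \<theta>" and p: "outer_fun p"
    and factor: "AE z in circle_measure. k z = \<theta> z * p z"
  shows "k \<in> gen_toeplitz_kernel (min_kernel_symbol \<Theta> \<theta> p) E1 (inner_mult_H2 \<Theta>)"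
proof -
  let ?g = "min_kernel_symbol \<Theta> \<theta> p"
  have pH: "p \<in> H2" using p by (simp add: outer_fun_def)
  have [measurable]: "\<Theta> \<in> borel_measurable borel" "\<theta> \<in> borel_measurable borel"
    "p \<in> borel_measurable borel" "k \<in> borel_measurable borel"
    using \<Theta> \<theta> pH k E1 by (auto simp: inner_fun_def H2_def L2T_def)
  have g: "?g \<in> LinfT"
    using \<Theta> \<theta> by (rule min_kernel_symbol_LinfT) measurable
  have "inner2 (\<lambda>z. ?g z * k z) (\<lambda>z. \<Theta> z * h z) = 0" if h: "h \<in> H2" for h
  proof -
    have [measurable]: "h \<in> borel_measurable borel"
      using h by (auto simp: H2_def L2T_def)
    have "AE z in circle_measure. cmod (\<Theta> z) = 1 \<and> cmod (\<theta> z) = 1 \<and> cmod z = 1 \<and> p z \<noteq> 0 \<and> k z = \<theta> z * p z"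
      using \<Theta> \<theta> AE_circle_measure_norm outer_fun_AE_nonzero[OF p] factor by (auto simp: inner_fun_def)
    then have "AE z in circle_measure. ?g z * k z * cnj (\<Theta> z * h z) = cnj (z * p z * h z)"
    proof eventually_elim
      case (elim z)
      then have unit: "cnj (\<Theta> z) = inverse (\<Theta> z)" "cnj (\<theta> z) = inverse (\<theta> z)" "cnj z = inverse z"
        and nonzero: "\<Theta> z \<noteq> 0" "\<theta> z \<noteq> 0" "z \<noteq> 0" "p z \<noteq> 0"
        by (auto simp: cnj_eq_inverse_if_norm_1)
      show ?case
        using elim by (simp add: min_kernel_symbol_def unit) (simp add: field_simps nonzero)
    qed
    then have "inner2 (\<lambda>z. ?g z * k z) (\<lambda>z. \<Theta> z * h z) = integral\<^sup>L circle_measure (\<lambda>z. cnj (z ^ 1 * p z * h z))"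
      unfolding inner2_def by (intro integral_cong_AE) (auto simp: min_kernel_symbol_def)
    also have "\<dots> = 0"
      using integral_power_mult_H2_eq_0[OF pH h, of 1] by (simp only: Bochner_Integration.integral_cnj) simp
    finally show ?thesis .
  qed
  with k show ?thesis
    by (simp add: gen_toeplitz_kernel_inner_mult_H2_iff[OF \<Theta> E1 g])
qed

lemma integral_shift_quotient_H2_eq_0:
  assumes a: "a \<in> H2" and b: "b \<in> H2" and p: "outer_fun p"
    and w: "(\<lambda>z. a z * b z / p z) \<in> L2T" and h: "h \<in> H2"
  shows "integral\<^sup>L circle_measure (\<lambda>z. z * (a z * b z / p z) * h z) = 0"
proof -
  have [measurable]: "a \<in> borel_measurable borel" "b \<in> borel_measurable borel"
    "p \<in> borel_measurable borel"
    using a b outer_fun_H2[OF p] by (auto simp: H2_def L2T_def)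
  have W: "(\<lambda>z. z * (a z * b z / p z)) \<in> L2T"
    using L2T_power_mult[OF w, of 1] by simp
  have "integral\<^sup>L circle_measure (\<lambda>z. z * (a z * b z / p z) * (poly q z * p z)) = 0" for q
  proof -
    have eq: "AE z in circle_measure. z * (a z * b z / p z) * (poly q z * p z) = z ^ 1 * (poly q z * a z) * b z"
      using outer_fun_AE_nonzero[OF p]
    proof eventually_elim
      case (elim z)
      have "z * (a z * b z / p z) * (poly q z * p z) = z * poly q z * (a z * b z / p z * p z)"
        by (simp only: mult_ac)
      also have "\<dots> = z ^ 1 * (poly q z * a z) * b z"
        using elim by (simp add: mult_ac)
      finally show ?case .
    qed
    have "integral\<^sup>L circle_measure (\<lambda>z. z * (a z * b z / p z) * (poly q z * p z))
        = integral\<^sup>L circle_measure (\<lambda>z. z ^ 1 * (poly q z * a z) * b z)"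
      by (rule integral_cong_AE[OF _ _ eq]; measurable)
    also have "\<dots> = 0"
      by (rule integral_power_mult_H2_eq_0[OF H2_poly_mult[OF a] b]) simp
    finally show ?thesis .
  qed
  then show ?thesis
    using outer_fun_integral_mult_H2_eq_0[OF p W _ h] by simp
qed

lemma inner2_inner_mult_H2_eq_0_if_cnj_shift_quotient:
  assumes \<Theta>: "inner_fun \<Theta>" and a: "a \<in> H2" and b: "b \<in> H2" and p: "outer_fun p"
    and F: "F \<in> L2T" and eq: "AE z in circle_measure. F z * cnj (\<Theta> z) = cnj (z * (a z * b z / p z))"
    and h: "h \<in> H2"
  shows "inner2 F (\<lambda>z. \<Theta> z * h z) = 0"
proof -
  have [measurable]: "a \<in> borel_measurable borel" "b \<in> borel_measurable borel"
    "p \<in> borel_measurable borel" "h \<in> borel_measurable borel" "\<Theta> \<in> borel_measurable borel"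
    "F \<in> borel_measurable borel"
    using a b outer_fun_H2[OF p] h \<Theta> F by (auto simp: inner_fun_def H2_def L2T_def)
  have "AE z in circle_measure. cmod (\<Theta> z) = 1"
    using \<Theta> by (simp add: inner_fun_def)
  then have "AE z in circle_measure. cmod (a z * b z / p z) \<le> 1 * cmod (F z)"
    using eq AE_circle_measure_norm
  proof eventually_elim
    case (elim z)
    have "cmod (a z * b z / p z) = cmod (cnj (z * (a z * b z / p z)))"
      using \<open>cmod z = 1\<close> by (simp add: norm_mult norm_divide)
    also have "\<dots> = cmod (F z * cnj (\<Theta> z))"
      using elim by simp
    also have "\<dots> = cmod (F z)"
      using \<open>cmod (\<Theta> z) = 1\<close> by (simp add: norm_mult)
    finally show ?case by simp
  qed
  then have w: "(\<lambda>z. a z * b z / p z) \<in> L2T"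
    by (rule L2T_dominated[OF F, rotated]) measurable
  have eq_h: "AE z in circle_measure. F z * cnj (\<Theta> z * h z) = cnj (z * (a z * b z / p z) * h z)"
    using eq
  proof eventually_elim
    case (elim z)
    have "F z * cnj (\<Theta> z * h z) = (F z * cnj (\<Theta> z)) * cnj (h z)"
      by (simp add: mult_ac)
    also have "\<dots> = cnj (z * (a z * b z / p z)) * cnj (h z)"
      by (simp only: elim)
    also have "\<dots> = cnj (z * (a z * b z / p z) * h z)"
      by simp
    finally show ?case .
  qed
  have "inner2 F (\<lambda>z. \<Theta> z * h z) = integral\<^sup>L circle_measure (\<lambda>z. cnj (z * (a z * b z / p z) * h z))"
    unfolding inner2_def by (rule integral_cong_AE[OF _ _ eq_h]; measurable)
  also have "\<dots> = 0"
    using integral_shift_quotient_H2_eq_0[OF a b p w h] by (simp only: Bochner_Integration.integral_cnj) simp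
  finally show ?thesis .
qed

text \<open>The pointwise identity $g f \overline{\Theta} = \overline{z a b / p}$ of the minimality proof,
  written for $k = \theta p$.\<close>
lemma min_kernel_symbol_identity:
  fixes G F T t z P :: complex
  assumes "cmod T = 1" "cmod t = 1" "cmod z = 1" "P \<noteq> 0"
  shows "G * F * cnj T = cnj (z * (cnj (z * (G * (t * P) * cnj T))
      * cnj (z * (T * cnj (t * z * P) / P * F * cnj T)) / P))"
proof -
  have unit: "cnj T = inverse T" "cnj t = inverse t" "cnj z = inverse z"
    using assms by (simp_all add: cnj_eq_inverse_if_norm_1)
  have "T \<noteq> 0" "t \<noteq> 0" "z \<noteq> 0" "P \<noteq> 0"
    using assms by auto
  then show ?thesis
    by (simp add: unit) (simp add: divide_simps)
qed

lemma gen_toeplitz_kernel_min_kernel_symbol_subset: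
  assumes \<Theta>: "inner_fun \<Theta>" and E1: "E1 \<subseteq> H2"
    and \<theta>: "inner_fun \<theta>" and p: "outer_fun p"
    and factor: "AE z in circle_measure. k z = \<theta> z * p z"
    and g: "g \<in> LinfT" and k: "k \<in> gen_toeplitz_kernel g E1 (inner_mult_H2 \<Theta>)"
  shows "gen_toeplitz_kernel (min_kernel_symbol \<Theta> \<theta> p) E1 (inner_mult_H2 \<Theta>)
           \<subseteq> gen_toeplitz_kernel g E1 (inner_mult_H2 \<Theta>)"
proof
  let ?g0 = "min_kernel_symbol \<Theta> \<theta> p"
  fix f assume f: "f \<in> gen_toeplitz_kernel ?g0 E1 (inner_mult_H2 \<Theta>)"
  have g0: "?g0 \<in> LinfT"
    using \<Theta> \<theta> outer_fun_H2[OF p] by (intro min_kernel_symbol_LinfT) (auto simp: H2_def L2T_def)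
  have fE: "f \<in> E1"
    using f by (simp add: gen_toeplitz_kernel_def)
  have gf: "(\<lambda>z. g z * f z) \<in> L2T"
    using fE E1 by (intro LinfT_mult_L2T[OF g] H2_imp_L2T) auto
  define a where "a z = cnj (z * (g z * k z * cnj (\<Theta> z)))" for z
  define b where "b z = cnj (z * (?g0 z * f z * cnj (\<Theta> z)))" for z
  have a: "a \<in> H2"
    unfolding a_def by (rule gen_toeplitz_kernel_cnj_H2[OF \<Theta> E1 g k])
  have b: "b \<in> H2"
    unfolding b_def by (rule gen_toeplitz_kernel_cnj_H2[OF \<Theta> E1 g0 f])
  have "AE z in circle_measure.
      cmod (\<Theta> z) = 1 \<and> cmod (\<theta> z) = 1 \<and> cmod z = 1 \<and> p z \<noteq> 0 \<and> k z = \<theta> z * p z"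
    using \<Theta> \<theta> AE_circle_measure_norm outer_fun_AE_nonzero[OF p] factor by (auto simp: inner_fun_def)
  then have "AE z in circle_measure. g z * f z * cnj (\<Theta> z) = cnj (z * (a z * b z / p z))"
  proof eventually_elim
    case (elim z)
    then have kz: "k z = \<theta> z * p z" by simp
    show ?case
      unfolding a_def b_def min_kernel_symbol_def kz
      by (rule min_kernel_symbol_identity) (use elim in simp_all)
  qed
  then have "inner2 (\<lambda>z. g z * f z) (\<lambda>z. \<Theta> z * h z) = 0" if "h \<in> H2" for h
    by (rule inner2_inner_mult_H2_eq_0_if_cnj_shift_quotient[OF \<Theta> a b p gf _ that])
  with fE show "f \<in> gen_toeplitz_kernel g E1 (inner_mult_H2 \<Theta>)"
    by (simp add: gen_toeplitz_kernel_inner_mult_H2_iff[OF \<Theta> E1 g])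
qed

theorem mainTheorem1:
  fixes E1 :: "(complex \<Rightarrow> complex) set"
    and \<Theta>2 \<theta> p k :: "complex \<Rightarrow> complex"
  assumes "closed_subspace_L2 E1" and "E1 \<subseteq> H2"
    and "inner_fun \<Theta>2"
    and "k \<in> E1" and "\<not> (AE z in circle_measure. k z = 0)"
    and "inner_fun \<theta>" and "outer_fun p"
    and "AE z in circle_measure. k z = \<theta> z * p z"
  shows "is_min_gen_toeplitz_kernel E1 (inner_mult_H2 \<Theta>2) k
           (gen_toeplitz_kernel (\<lambda>z. \<Theta>2 z * cnj (\<theta> z * z * p z) / p z) E1 (inner_mult_H2 \<Theta>2))"
proof -
  have symbol: "(\<lambda>z. \<Theta>2 z * cnj (\<theta> z * z * p z) / p z) = min_kernel_symbol \<Theta>2 \<theta> p"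
    by (simp add: fun_eq_iff min_kernel_symbol_def)
  have "p \<in> borel_measurable borel"
    using outer_fun_H2[OF assms(7)] by (simp add: H2_def L2T_def)
  then show ?thesis
    unfolding is_min_gen_toeplitz_kernel_def symbol
    using min_kernel_symbol_LinfT[OF assms(3,6)]
      mem_gen_toeplitz_kernel_min_kernel_symbol[OF assms(3,2,4,6,7,8)]
      gen_toeplitz_kernel_min_kernel_symbol_subset[OF assms(3,2,6,7,8)]
    by blast
qed

end
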